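(* Fix unlabeled samples $S_1,\dots,S_T$, where $S_i=(x^i_1,\dots,x^i_n)$. Fix a set $I\subseteq\{1,\dots,T\}$ with $|I|=k$ and fix weights $\alpha^1,\dots,\alpha^T\in\Lambda^I$. Let $\mathcal{H}$ have VC dimension $d$ with $1\le d\le m\le n$. For each $i\in I$, let $\overline{S}_i$ be a uniformly random subset of $m$ of the $n$ points of $S_i$, chosen without replacement, independently over $i\in I$. Then for every $\delta\in(0,1)$, with probability at least $1-\delta/4$ over the choice of the $\overline{S}_i$, the following holds simultaneously for all $h_1,\dots,h_T\in\mathcal{H}$: $$\frac1T\sum_{t=1}^T\tilde{\mathrm{er}}_{\alpha^t}(h_t)\le\frac1T\sum_{t=1}^T\widehat{\mathrm{er}}_{\alpha^t}(h_t)+\frac1T\|\alpha\|_{2,1}\sqrt{\frac{2d\log(ekm/d)}{m}}+\frac1T\|\alpha\|_{1,2}\sqrt{\frac{\log(4/\delta)}{2m}}.$$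
   Context: Labeling functions $f_i:\mathcal{X}\to\{-1,1\}$ are given, and $\ell$ is the $0/1$-loss. Weight sets: $\Lambda^I=\{\alpha\in[0,1]^T:\sum_i\alpha_i=1,\ \alpha_i=0\text{ for }i\notin I\}$. Empirical errors: - $\tilde{\mathrm{er}}_i(h)=\frac1n\sum_{j=1}^n\ell(h(x^i_j),f_i(x^i_j))$; - $\widehat{\mathrm{er}}_i(h)=\frac1m\sum_{x\in\overline{S}_i}\ell(h(x),f_i(x))$; - for $\alpha\in\Lambda^I$, $\tilde{\mathrm{er}}_\alpha=\sum_{i\in I}\alpha_i\tilde{\mathrm{er}}_i$ and $\widehat{\mathrm{er}}_\alpha=\sum_{i\in I}\alpha_i\widehat{\mathrm{er}}_i$. Mixed norms: $\|\alpha\|_{2,1}=\sum_{t=1}^T\sqrt{\sum_{i\in I}(\alpha^t_i)^2}$ and $\|\alpha\|_{1,2}=\sqrt{\sum_{i\in I}(\sum_{t=1}^T\alpha^t_i)^2}$. *)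

theory Defs
  imports "HOL-Probability.Probability"
begin

text \<open>Labels in {-1,1} are represented by bool (True ~ 1, False ~ -1).\<close>

definition zero_one_loss :: "bool \<Rightarrow> bool \<Rightarrow> real" where
  "zero_one_loss a b = (if a = b then 0 else 1)"

definition shatters :: "('x \<Rightarrow> bool) set \<Rightarrow> 'x set \<Rightarrow> bool" where
  "shatters H A \<longleftrightarrow> (\<forall>B \<subseteq> A. \<exists>h\<in>H. {x \<in> A. h x} = B)"

definition has_vc_dim :: "('x \<Rightarrow> bool) set \<Rightarrow> nat \<Rightarrow> bool" where
  "has_vc_dim H d \<longleftrightarrow>
     (\<exists>A. finite A \<and> card A = d \<and> shatters H A) \<and>
     (\<forall>A. finite A \<and> shatters H A \<longrightarrow> card A \<le> d)"

definition Lambda :: "nat \<Rightarrow> nat set \<Rightarrow> (nat \<Rightarrow> real) set" where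
  "Lambda T I = {a. (\<forall>i<T. 0 \<le> a i \<and> a i \<le> 1) \<and> (\<Sum>i<T. a i) = 1 \<and>
                    (\<forall>i<T. i \<notin> I \<longrightarrow> a i = 0)}"

text \<open>Samples: S i j is the point x^i_j, for task i < T and j < n.\<close>
definition err_full :: "(nat \<Rightarrow> nat \<Rightarrow> 'x) \<Rightarrow> (nat \<Rightarrow> 'x \<Rightarrow> bool) \<Rightarrow> nat \<Rightarrow> nat \<Rightarrow> ('x \<Rightarrow> bool) \<Rightarrow> real" where
  "err_full S f n i h = (1 / real n) * (\<Sum>j<n. zero_one_loss (h (S i j)) (f i (S i j)))"

definition err_sub :: "(nat \<Rightarrow> nat \<Rightarrow> 'x) \<Rightarrow> (nat \<Rightarrow> 'x \<Rightarrow> bool) \<Rightarrow> nat \<Rightarrow> nat set \<Rightarrow> nat \<Rightarrow> ('x \<Rightarrow> bool) \<Rightarrow> real" where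
  "err_sub S f m J i h = (1 / real m) * (\<Sum>j\<in>J. zero_one_loss (h (S i j)) (f i (S i j)))"

definition err_full_w :: "(nat \<Rightarrow> nat \<Rightarrow> 'x) \<Rightarrow> (nat \<Rightarrow> 'x \<Rightarrow> bool) \<Rightarrow> nat \<Rightarrow> nat set \<Rightarrow> (nat \<Rightarrow> real) \<Rightarrow> ('x \<Rightarrow> bool) \<Rightarrow> real" where
  "err_full_w S f n I a h = (\<Sum>i\<in>I. a i * err_full S f n i h)"

definition err_sub_w :: "(nat \<Rightarrow> nat \<Rightarrow> 'x) \<Rightarrow> (nat \<Rightarrow> 'x \<Rightarrow> bool) \<Rightarrow> nat \<Rightarrow> (nat \<Rightarrow> nat set) \<Rightarrow> nat set \<Rightarrow> (nat \<Rightarrow> real) \<Rightarrow> ('x \<Rightarrow> bool) \<Rightarrow> real" where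
  "err_sub_w S f m J I a h = (\<Sum>i\<in>I. a i * err_sub S f m (J i) i h)"

text \<open>Mixed norms of alpha = (alpha^1..alpha^T), alpha t i = alpha^t_i.\<close>
definition norm_21 :: "nat \<Rightarrow> nat set \<Rightarrow> (nat \<Rightarrow> nat \<Rightarrow> real) \<Rightarrow> real" where
  "norm_21 T I \<alpha> = (\<Sum>t<T. sqrt (\<Sum>i\<in>I. (\<alpha> t i)\<^sup>2))"

definition norm_12 :: "nat \<Rightarrow> nat set \<Rightarrow> (nat \<Rightarrow> nat \<Rightarrow> real) \<Rightarrow> real" where
  "norm_12 T I \<alpha> = sqrt (\<Sum>i\<in>I. (\<Sum>t<T. \<alpha> t i)\<^sup>2)"

definition subsample_pmf :: "nat set \<Rightarrow> nat \<Rightarrow> nat \<Rightarrow> (nat \<Rightarrow> nat set) pmf" where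
  "subsample_pmf I n m = Pi_pmf I {} (\<lambda>_. pmf_of_set {J. J \<subseteq> {..<n} \<and> card J = m})"

end

theory Submission
  imports Defs
begin

text \<open>
  Restricted to the sample points, the hypothesis class becomes finite. Let \<open>\<Phi>(J)\<close> be the sum over
  tasks of the largest weighted gap between full-sample and subsample error. It is a convex function
  of the subsample indicator vectors, so by Hoeffding's reduction its exponential moments under
  sampling without replacement are at most those under \<open>m\<close> independent draws with replacement per
  task. For independent draws McDiarmid's inequality makes \<open>\<Phi>\<close> sub-Gaussian with variance proxy
  \<open>norm_12 T I \<alpha>\<^sup>2 / (T\<^sup>2 m)\<close>, while symmetrisation, Massart's lemma and the Sauer--Shelah lemma
  on the at most \<open>k m\<close> drawn points bound its mean by the \<open>norm_21\<close> term. Chernoff's bound with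
  failure probability \<open>\<delta>/4\<close> gives the last term.
\<close>

section \<open>Uniform averages\<close>

text \<open>All probabilities below are uniform on finite sets, so expectations are written as averages.\<close>

definition avg :: "'a set \<Rightarrow> ('a \<Rightarrow> real) \<Rightarrow> real" where
  "avg A g = (\<Sum>x\<in>A. g x) / real (card A)"

lemma avg_cong: "(\<And>x. x \<in> A \<Longrightarrow> g x = h x) \<Longrightarrow> avg A g = avg A h"
  unfolding avg_def by (simp cong: sum.cong)

lemma avg_const: "finite A \<Longrightarrow> A \<noteq> {} \<Longrightarrow> avg A (\<lambda>_. c) = c"
  unfolding avg_def by simp

lemma avg_mono: "(\<And>x. x \<in> A \<Longrightarrow> g x \<le> h x) \<Longrightarrow> avg A g \<le> avg A h"
  unfolding avg_def by (intro divide_right_mono sum_mono) auto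

lemma avg_add: "avg A (\<lambda>x. g x + h x) = avg A g + avg A h"
  unfolding avg_def by (simp add: sum.distrib add_divide_distrib)

lemma avg_diff: "avg A (\<lambda>x. g x - h x) = avg A g - avg A h"
  unfolding avg_def by (simp add: sum_subtractf diff_divide_distrib)

lemma avg_cmult: "avg A (\<lambda>x. c * g x) = c * avg A g"
  unfolding avg_def by (simp add: sum_distrib_left)

lemma avg_sum: "avg A (\<lambda>x. \<Sum>j\<in>J. g j x) = (\<Sum>j\<in>J. avg A (g j))"
  unfolding avg_def by (simp add: sum.swap[of _ J A] sum_divide_distrib)

lemma avg_swap: "avg A (\<lambda>x. avg B (\<lambda>y. g x y)) = avg B (\<lambda>y. avg A (\<lambda>x. g x y))"
  unfolding avg_def by (simp add: sum_divide_distrib[symmetric] sum.swap[of _ A B])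

lemma avg_Times: "avg A (\<lambda>x. avg B (\<lambda>y. g x y)) = avg (A \<times> B) (\<lambda>p. g (fst p) (snd p))"
  unfolding avg_def
  by (simp add: sum.cartesian_product card_cartesian_product sum_divide_distrib[symmetric]
      divide_divide_eq_left mult.commute case_prod_beta)

lemma avg_reindex: "bij_betw \<phi> A B \<Longrightarrow> avg B g = avg A (\<lambda>x. g (\<phi> x))"
  unfolding avg_def by (simp add: bij_betw_same_card sum.reindex_bij_betw)

lemma abs_avg_le: "\<bar>avg A g\<bar> \<le> avg A (\<lambda>x. \<bar>g x\<bar>)"
  unfolding avg_def by (simp add: abs_divide divide_right_mono sum_abs)

lemma card_filter_le_avg:
  assumes "finite A"
    and "\<And>x. x \<in> A \<Longrightarrow> 0 \<le> g x" "\<And>x. x \<in> A \<Longrightarrow> P x \<Longrightarrow> 1 \<le> g x"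
  shows "real (card {x\<in>A. P x}) / real (card A) \<le> avg A g"
proof -
  have "real (card {x\<in>A. P x}) = (\<Sum>x\<in>A. if P x then 1 else 0)"
    using assms(1) by (simp add: sum.If_cases Int_def conj_commute)
  also have "\<dots> \<le> (\<Sum>x\<in>A. g x)" by (intro sum_mono) (use assms in auto)
  finally show ?thesis unfolding avg_def by (intro divide_right_mono) auto
qed

lemma bij_betw_PiE_dflt_insert:
  assumes "i \<notin> I"
  shows "bij_betw (\<lambda>(v, g). g(i := v)) (B i \<times> PiE_dflt I d B) (PiE_dflt (insert i I) d B)"
proof (rule bij_betw_byWitness[where f' = "\<lambda>g. (g i, g(i := d))"])
  show "\<forall>p\<in>B i \<times> PiE_dflt I d B. (\<lambda>g. (g i, g(i := d))) ((\<lambda>(v, g). g(i := v)) p) = p"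
    using assms by (auto simp: PiE_dflt_def fun_eq_iff)
qed (use assms in \<open>auto simp: PiE_dflt_def\<close>)

lemma avg_PiE_dflt_insert:
  assumes "finite I" "i \<notin> I" "\<And>x. x \<in> insert i I \<Longrightarrow> finite (B x)"
  shows "avg (PiE_dflt (insert i I) d B) F = avg (B i) (\<lambda>v. avg (PiE_dflt I d B) (\<lambda>g. F (g(i := v))))"
  by (simp add: avg_reindex[OF bij_betw_PiE_dflt_insert[OF assms(2)]] avg_Times case_prod_beta)

lemma avg_PiE_dflt_prod:
  assumes "finite C" "\<And>x. x \<in> C \<Longrightarrow> finite (B x)"
  shows "avg (PiE_dflt C d B) (\<lambda>s. \<Prod>c\<in>C. g c (s c)) = (\<Prod>c\<in>C. avg (B c) (g c))"
  using assms
proof (induction C rule: finite_induct)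
  case empty
  have "PiE_dflt {} d B = {\<lambda>_. d}" by (auto simp: PiE_dflt_def)
  then show ?case by (simp add: avg_def)
next
  case (insert i C)
  have "avg (PiE_dflt (insert i C) d B) (\<lambda>s. \<Prod>c\<in>insert i C. g c (s c))
      = avg (B i) (\<lambda>v. avg (PiE_dflt C d B) (\<lambda>s. g i v * (\<Prod>c\<in>C. g c (s c))))"
    using insert by (subst avg_PiE_dflt_insert) (auto intro!: avg_cong prod.cong)
  also have "\<dots> = (\<Prod>c\<in>insert i C. avg (B c) (g c))"
    using insert by (simp add: avg_cmult avg_def sum_distrib_right[symmetric] mult.commute)
  finally show ?case .
qed

lemma avg_PiE_dflt_coordinate:
  assumes "finite C" "c \<in> C" and "\<And>x. x \<in> C \<Longrightarrow> finite (B x) \<and> B x \<noteq> {}"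
  shows "avg (PiE_dflt C d B) (\<lambda>Y. F (Y c)) = avg (B c) F"
proof -
  let ?g = "\<lambda>c' v. if c' = c then F v else 1"
  have "avg (PiE_dflt C d B) (\<lambda>Y. F (Y c)) = avg (PiE_dflt C d B) (\<lambda>Y. \<Prod>c'\<in>C. ?g c' (Y c'))"
    using assms by (simp add: prod.delta)
  also have "\<dots> = (\<Prod>c'\<in>C. avg (B c') (?g c'))"
    using assms by (intro avg_PiE_dflt_prod) auto
  also have "\<dots> = (\<Prod>c'\<in>C. if c' = c then avg (B c) F else 1)"
    using assms by (intro prod.cong) (auto simp: avg_const)
  also have "\<dots> = avg (B c) F"
    using assms by (simp add: prod.delta)
  finally show ?thesis .
qed

lemma exp_weighted_sum_le:
  fixes x \<mu> :: "'a \<Rightarrow> real"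
  assumes "finite A" "\<And>y. y \<in> A \<Longrightarrow> 0 \<le> \<mu> y" "sum \<mu> A = 1"
  shows "exp (\<Sum>y\<in>A. \<mu> y * x y) \<le> (\<Sum>y\<in>A. \<mu> y * exp (x y))"
  using convex_on_sum[OF assms(1) _ exp_convex assms(3,2)] assms(3) by fastforce

lemma exp_avg_le_avg_exp:
  assumes "finite A" "A \<noteq> {}"
  shows "exp (avg A g) \<le> avg A (\<lambda>x. exp (g x))"
  using exp_weighted_sum_le[of A "\<lambda>_. 1 / real (card A)" g] assms
  by (simp add: avg_def sum_divide_distrib)

lemma Max_avg_le_avg_Max:
  assumes "finite H" "H \<noteq> {}"
  shows "Max ((\<lambda>h. avg A (F h)) ` H) \<le> avg A (\<lambda>y. Max ((\<lambda>h. F h y) ` H))"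
  using assms by (auto intro!: avg_mono Max_ge)

lemma Max_add_le:
  fixes u v :: "'h \<Rightarrow> real"
  assumes "finite H" "H \<noteq> {}"
  shows "Max ((\<lambda>h. u h + v h) ` H) \<le> Max (u ` H) + Max (v ` H)"
  using assms by (intro Max.boundedI) (auto intro!: add_mono Max_ge)

lemma Max_image_diff_le:
  fixes u v :: "'h \<Rightarrow> real"
  assumes "finite H" "H \<noteq> {}" and "\<And>h. h \<in> H \<Longrightarrow> \<bar>u h - v h\<bar> \<le> c"
  shows "\<bar>Max (u ` H) - Max (v ` H)\<bar> \<le> c"
proof -
  have "Max (u ` H) \<le> Max (v ` H) + c" if "\<And>h. h \<in> H \<Longrightarrow> u h \<le> v h + c" for u v :: "'h \<Rightarrow> real"
    using assms(1,2) that by (intro Max.boundedI) (auto intro: order.trans[OF _ add_right_mono[OF Max_ge]])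
  from this[of u v] this[of v u] show ?thesis using assms(3) by (fastforce simp: abs_le_iff)
qed

lemma Max_weighted_sum_le:
  fixes F :: "'y \<Rightarrow> 'h \<Rightarrow> real"
  assumes "finite H" "H \<noteq> {}" "finite A" "\<And>y. y \<in> A \<Longrightarrow> 0 \<le> \<mu> y"
  shows "Max ((\<lambda>h. \<Sum>y\<in>A. \<mu> y * F y h) ` H) \<le> (\<Sum>y\<in>A. \<mu> y * Max ((\<lambda>h. F y h) ` H))"
  using assms by (intro Max.boundedI) (auto intro!: sum_mono mult_left_mono Max_ge)

section \<open>Concentration inequalities\<close>

lemma hoeffdings_lemma_avg:
  fixes g :: "'a \<Rightarrow> real"
  assumes "finite A" "A \<noteq> {}" and "\<And>x. x \<in> A \<Longrightarrow> a \<le> g x \<and> g x \<le> b" and "l > 0"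
  shows "avg A (\<lambda>x. exp (l * (g x - avg A g))) \<le> exp (l\<^sup>2 * (b - a)\<^sup>2 / 8)"
proof -
  let ?M = "measure_pmf (pmf_of_set A)"
  interpret interval_bounded_random_variable ?M g a b
    by unfold_locales (use assms in \<open>auto simp: AE_measure_pmf_iff\<close>)
  have E: "integral\<^sup>L ?M h = avg A h" for h
    using assms by (simp add: integral_pmf_of_set avg_def)
  have "ennreal (avg A (\<lambda>x. exp (l * (g x - avg A g))))
      = (\<integral>\<^sup>+ x. ennreal (exp (l * (g x - integral\<^sup>L ?M g))) \<partial>?M)"
    using assms by (subst nn_integral_eq_integral) (auto simp: E integrable_measure_pmf_finite)
  also have "\<dots> \<le> ennreal (exp (l\<^sup>2 * (b - a)\<^sup>2 / 8))"
    by (rule Hoeffdings_lemma_nn_integral[OF \<open>l > 0\<close>])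
  finally show ?thesis by (simp add: ennreal_le_iff)
qed

lemma hoeffdings_lemma_avg_oscillation:
  fixes g :: "'a \<Rightarrow> real"
  assumes A: "finite A" "A \<noteq> {}" and osc: "\<And>x y. x \<in> A \<Longrightarrow> y \<in> A \<Longrightarrow> g x - g y \<le> c" and "l > 0"
  shows "avg A (\<lambda>x. exp (l * (g x - avg A g))) \<le> exp (l\<^sup>2 * c\<^sup>2 / 8)"
proof -
  have "Min (g ` A) \<in> g ` A" using A by (intro Min_in) auto
  then obtain y where y: "y \<in> A" "g y = Min (g ` A)" by auto
  have "Min (g ` A) \<le> g x \<and> g x \<le> Min (g ` A) + c" if "x \<in> A" for x
    using that A osc[OF that y(1)] y(2) by auto
  from hoeffdings_lemma_avg[OF A this \<open>l > 0\<close>] show ?thesis by simp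
qed

lemma abs_diff_avg_update_le:
  assumes "finite (B i)" "B i \<noteq> {}" "i \<notin> C" "y \<in> PiE_dflt C d B" "x \<in> C" "w \<in> B x"
    and bd: "\<And>y v. y \<in> PiE_dflt (insert i C) d B \<Longrightarrow> v \<in> B x \<Longrightarrow> \<bar>\<Psi> (y(x := v)) - \<Psi> y\<bar> \<le> c"
  shows "\<bar>avg (B i) (\<lambda>v. \<Psi> ((y(x := w))(i := v))) - avg (B i) (\<lambda>v. \<Psi> (y(i := v)))\<bar> \<le> c"
proof -
  have "x \<noteq> i" using assms by auto
  then have "avg (B i) (\<lambda>v. \<Psi> ((y(x := w))(i := v))) - avg (B i) (\<lambda>v. \<Psi> (y(i := v)))
      = avg (B i) (\<lambda>v. \<Psi> ((y(i := v))(x := w)) - \<Psi> (y(i := v)))"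
    unfolding avg_diff[symmetric] by (simp add: fun_upd_twist)
  also have "\<bar>\<dots>\<bar> \<le> avg (B i) (\<lambda>v. \<bar>\<Psi> ((y(i := v))(x := w)) - \<Psi> (y(i := v))\<bar>)"
    by (rule abs_avg_le)
  also have "\<dots> \<le> avg (B i) (\<lambda>v. c)"
    using assms by (intro avg_mono bd) (auto simp: PiE_dflt_def)
  finally show ?thesis using assms(1,2) by (simp add: avg_const)
qed

text \<open>One step of the martingale argument: conditioning on all coordinates but \<open>i\<close>.\<close>

lemma avg_exp_centered_PiE_dflt_insert_le:
  fixes \<Psi> :: "('c \<Rightarrow> 'a) \<Rightarrow> real" and C :: "'c set" and d :: 'a and B :: "'c \<Rightarrow> 'a set" and i :: 'c
  defines "P \<equiv> PiE_dflt C d B" and "\<Psi>\<^sub>i \<equiv> \<lambda>g. avg (B i) (\<lambda>v. \<Psi> (g(i := v)))"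
  assumes "finite C" "i \<notin> C" "\<And>x. x \<in> insert i C \<Longrightarrow> finite (B x)" "B i \<noteq> {}" "l > 0"
    and osc: "\<And>g v w. g \<in> P \<Longrightarrow> v \<in> B i \<Longrightarrow> w \<in> B i \<Longrightarrow> \<Psi> (g(i := v)) - \<Psi> (g(i := w)) \<le> c"
  shows "avg (PiE_dflt (insert i C) d B) (\<lambda>y. exp (l * (\<Psi> y - avg (PiE_dflt (insert i C) d B) \<Psi>)))
         \<le> exp (l\<^sup>2 * c\<^sup>2 / 8) * avg P (\<lambda>g. exp (l * (\<Psi>\<^sub>i g - avg P \<Psi>\<^sub>i)))"
proof -
  have avg_insert: "avg (PiE_dflt (insert i C) d B) F = avg P (\<lambda>g. avg (B i) (\<lambda>v. F (g(i := v))))" for F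
  proof -
    have "avg (PiE_dflt (insert i C) d B) F = avg (B i) (\<lambda>v. avg P (\<lambda>g. F (g(i := v))))"
      unfolding P_def by (rule avg_PiE_dflt_insert) (use assms(3-5) in auto)
    then show ?thesis by (simp only: avg_swap[of "B i"])
  qed
  have "avg (PiE_dflt (insert i C) d B) (\<lambda>y. exp (l * (\<Psi> y - avg (PiE_dflt (insert i C) d B) \<Psi>)))
      = avg P (\<lambda>g. exp (l * (\<Psi>\<^sub>i g - avg P \<Psi>\<^sub>i)) * avg (B i) (\<lambda>v. exp (l * (\<Psi> (g(i := v)) - \<Psi>\<^sub>i g))))"
    unfolding avg_insert[of \<Psi>] \<Psi>\<^sub>i_def[symmetric] avg_insert
    by (intro avg_cong) (simp add: avg_cmult[symmetric] exp_add[symmetric] algebra_simps)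
  also have "\<dots> \<le> avg P (\<lambda>g. exp (l * (\<Psi>\<^sub>i g - avg P \<Psi>\<^sub>i)) * exp (l\<^sup>2 * c\<^sup>2 / 8))"
    unfolding \<Psi>\<^sub>i_def using assms(5-7) osc
    by (intro avg_mono mult_left_mono hoeffdings_lemma_avg_oscillation) auto
  also have "\<dots> = exp (l\<^sup>2 * c\<^sup>2 / 8) * avg P (\<lambda>g. exp (l * (\<Psi>\<^sub>i g - avg P \<Psi>\<^sub>i)))"
    by (simp add: avg_def sum_distrib_right mult.commute)
  finally show ?thesis .
qed

lemma mcdiarmid_avg:
  fixes \<Psi> :: "('c \<Rightarrow> 'a) \<Rightarrow> real"
  assumes "finite C" and "\<And>x. x \<in> C \<Longrightarrow> finite (B x) \<and> B x \<noteq> {}" and "l > 0"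
    and "\<And>y x v. y \<in> PiE_dflt C d B \<Longrightarrow> x \<in> C \<Longrightarrow> v \<in> B x \<Longrightarrow> \<bar>\<Psi> (y(x := v)) - \<Psi> y\<bar> \<le> c x"
  shows "avg (PiE_dflt C d B) (\<lambda>y. exp (l * (\<Psi> y - avg (PiE_dflt C d B) \<Psi>)))
           \<le> exp (l\<^sup>2 * (\<Sum>x\<in>C. (c x)\<^sup>2) / 8)"
  using assms(1,2,4)
proof (induction C arbitrary: \<Psi> rule: finite_induct)
  case empty
  have "PiE_dflt {} d B = {\<lambda>_. d}" by (auto simp: PiE_dflt_def)
  then show ?case by (simp add: avg_def)
next
  case (insert i C)
  define P where "P = PiE_dflt C d B"
  define \<Psi>\<^sub>i where "\<Psi>\<^sub>i g = avg (B i) (\<lambda>v. \<Psi> (g(i := v)))" for g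
  have Bi: "finite (B i)" "B i \<noteq> {}" using insert by auto
  have upd: "g(i := v) \<in> PiE_dflt (insert i C) d B" if "g \<in> P" "v \<in> B i" for g v
    using that insert.hyps unfolding P_def PiE_dflt_def by auto
  have "\<bar>\<Psi>\<^sub>i (y(x := w)) - \<Psi>\<^sub>i y\<bar> \<le> c x" if yxw: "y \<in> P" "x \<in> C" "w \<in> B x" for y x w
  proof -
    have "\<bar>\<Psi> (g(x := v)) - \<Psi> g\<bar> \<le> c x" if "g \<in> PiE_dflt (insert i C) d B" "v \<in> B x" for g v
      using insert.prems(2) that yxw(2) by blast
    then show ?thesis
      unfolding \<Psi>\<^sub>i_def using abs_diff_avg_update_le[OF Bi insert.hyps(2) yxw[unfolded P_def]] by blast
  qed
  then have IH: "avg P (\<lambda>g. exp (l * (\<Psi>\<^sub>i g - avg P \<Psi>\<^sub>i))) \<le> exp (l\<^sup>2 * (\<Sum>x\<in>C. (c x)\<^sup>2) / 8)"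
    unfolding P_def using insert.IH insert.prems(1) by blast
  have osc: "\<Psi> (g(i := v)) - \<Psi> (g(i := w)) \<le> c i" if "g \<in> P" "v \<in> B i" "w \<in> B i" for g v w
    using insert.prems(2)[OF upd[OF that(1,3)], of i v] that(2) by fastforce
  have "avg (PiE_dflt (insert i C) d B) (\<lambda>y. exp (l * (\<Psi> y - avg (PiE_dflt (insert i C) d B) \<Psi>)))
      \<le> exp (l\<^sup>2 * (c i)\<^sup>2 / 8) * avg P (\<lambda>g. exp (l * (\<Psi>\<^sub>i g - avg P \<Psi>\<^sub>i)))"
    unfolding P_def \<Psi>\<^sub>i_def[abs_def] using insert.hyps insert.prems(1) \<open>l > 0\<close> osc
    by (intro avg_exp_centered_PiE_dflt_insert_le) (auto simp: P_def)
  also have "\<dots> \<le> exp (l\<^sup>2 * (c i)\<^sup>2 / 8) * exp (l\<^sup>2 * (\<Sum>x\<in>C. (c x)\<^sup>2) / 8)"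
    by (intro mult_left_mono IH) auto
  also have "\<dots> = exp (l\<^sup>2 * (\<Sum>x\<in>insert i C. (c x)\<^sup>2) / 8)"
    using insert.hyps by (simp add: exp_add[symmetric] algebra_simps add_divide_distrib)
  finally show ?case .
qed

lemma chernoff_avg:
  assumes "finite A" "A \<noteq> {}" and "\<sigma> > 0" "0 < \<epsilon>" "\<epsilon> < 1"
    and mgf: "\<And>l. l > 0 \<Longrightarrow> avg A (\<lambda>x. exp (l * \<Phi> x)) \<le> exp (l * a + l\<^sup>2 * \<sigma>\<^sup>2 / 8)"
  shows "real (card {x\<in>A. a + \<sigma> * sqrt (ln (1 / \<epsilon>) / 2) < \<Phi> x}) / real (card A) \<le> \<epsilon>"
proof -
  define t where "t = \<sigma> * sqrt (ln (1 / \<epsilon>) / 2)"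
  define l where "l = 4 * t / \<sigma>\<^sup>2"
  have "ln (1 / \<epsilon>) > 0" using assms by simp
  then have "l > 0" using \<open>\<sigma> > 0\<close> by (simp add: t_def l_def)
  have "t\<^sup>2 = \<sigma>\<^sup>2 * (ln (1 / \<epsilon>) / 2)"
    using \<open>ln (1 / \<epsilon>) > 0\<close> by (simp add: t_def power_mult_distrib)
  moreover have "- l * t + l\<^sup>2 * \<sigma>\<^sup>2 / 8 = - 2 * t\<^sup>2 / \<sigma>\<^sup>2"
    using \<open>\<sigma> > 0\<close> by (simp add: l_def field_simps power2_eq_square)
  ultimately have exponent: "- l * t + l\<^sup>2 * \<sigma>\<^sup>2 / 8 = - ln (1 / \<epsilon>)"
    using \<open>\<sigma> > 0\<close> by (simp add: field_simps)
  have "real (card {x\<in>A. a + t < \<Phi> x}) / real (card A) \<le> avg A (\<lambda>x. exp (l * (\<Phi> x - (a + t))))"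
    using \<open>l > 0\<close> by (intro card_filter_le_avg \<open>finite A\<close>) auto
  also have "\<dots> = exp (- l * (a + t)) * avg A (\<lambda>x. exp (l * \<Phi> x))"
    unfolding avg_cmult[symmetric] by (intro avg_cong) (simp add: exp_add[symmetric] algebra_simps)
  also have "\<dots> \<le> exp (- l * (a + t)) * exp (l * a + l\<^sup>2 * \<sigma>\<^sup>2 / 8)"
    by (intro mult_left_mono mgf \<open>l > 0\<close>) auto
  also have "\<dots> = exp (- l * t + l\<^sup>2 * \<sigma>\<^sup>2 / 8)"
    by (simp add: exp_add[symmetric] algebra_simps)
  also have "\<dots> = \<epsilon>"
    unfolding exponent using assms by (simp add: exp_minus)
  finally show ?thesis unfolding t_def .
qed

lemma prob_pmf_of_set_ge:
  assumes "finite A" "A \<noteq> {}" and "\<And>x. x \<in> A \<Longrightarrow> \<not> Q x \<Longrightarrow> P x"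
    and "real (card {x\<in>A. Q x}) / real (card A) \<le> \<epsilon>"
  shows "1 - \<epsilon> \<le> measure_pmf.prob (pmf_of_set A) {x. P x}"
proof -
  have "card {x\<in>A. \<not> Q x} \<le> card (A \<inter> {x. P x})"
    using assms(1,3) by (intro card_mono) auto
  moreover have "card {x\<in>A. \<not> Q x} = card A - card {x\<in>A. Q x}"
    using assms(1) by (subst card_Diff_subset[symmetric]) (auto intro: arg_cong[where f = card])
  moreover have "card {x\<in>A. Q x} \<le> card A" using assms(1) by (intro card_mono) auto
  ultimately have "real (card A) - real (card {x\<in>A. Q x}) \<le> real (card (A \<inter> {x. P x}))"
    by linarith
  then have "(real (card A) - real (card {x\<in>A. Q x})) / real (card A) \<le> real (card (A \<inter> {x. P x})) / real (card A)"
    by (intro divide_right_mono) auto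
  moreover have "(real (card A) - real (card {x\<in>A. Q x})) / real (card A) = 1 - real (card {x\<in>A. Q x}) / real (card A)"
    using assms(1,2) by (simp add: diff_divide_distrib)
  ultimately have "1 - real (card {x\<in>A. Q x}) / real (card A) \<le> real (card (A \<inter> {x. P x})) / real (card A)"
    by simp
  then show ?thesis using assms by (simp add: measure_pmf_of_set)
qed

section \<open>Sampling without replacement\<close>

definition size_subsets :: "nat \<Rightarrow> nat \<Rightarrow> nat set set" where
  "size_subsets n m = {Z. Z \<subseteq> {..<n} \<and> card Z = m}"

definition draw_seqs :: "nat \<Rightarrow> nat \<Rightarrow> (nat \<Rightarrow> nat) set" where
  "draw_seqs n m = PiE_dflt {..<m} 0 (\<lambda>_. {..<n})"

definition draw_count :: "nat \<Rightarrow> (nat \<Rightarrow> nat) \<Rightarrow> nat \<Rightarrow> real" where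
  "draw_count m Y a = real (card {l\<in>{..<m}. Y l = a})"

text \<open>The mass of a draw sequence is spread uniformly over the \<open>m\<close>-subsets containing its range.
  Hoeffding's reduction rests on the fact that, averaged against these weights, the count vectors of
  the draws become a multiple of the indicator of the subset.\<close>

definition cover_weight :: "nat \<Rightarrow> nat \<Rightarrow> (nat \<Rightarrow> nat) \<Rightarrow> nat set \<Rightarrow> real" where
  "cover_weight n m Y Z =
     (if Y ` {..<m} \<subseteq> Z then 1 / real ((n - card (Y ` {..<m})) choose (m - card (Y ` {..<m}))) else 0)"

definition relabel_draws :: "nat \<Rightarrow> (nat \<Rightarrow> nat) \<Rightarrow> (nat \<Rightarrow> nat) \<Rightarrow> nat \<Rightarrow> nat" where
  "relabel_draws m \<sigma> Y = (\<lambda>l. if l < m then \<sigma> (Y l) else 0)"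

lemma finite_size_subsets: "finite (size_subsets n m)"
  unfolding size_subsets_def by (rule finite_subset[of _ "Pow {..<n}"]) auto

lemma card_size_subsets: "card (size_subsets n m) = n choose m"
  unfolding size_subsets_def using n_subsets[of "{..<n}" m] by simp

lemma size_subsets_nonempty: "m \<le> n \<Longrightarrow> size_subsets n m \<noteq> {}"
  using card_size_subsets[of n m] by (auto simp: finite_size_subsets)

lemma finite_draw_seqs: "finite (draw_seqs n m)"
  unfolding draw_seqs_def by auto

lemma card_draw_seqs: "card (draw_seqs n m) = n ^ m"
  unfolding draw_seqs_def by (subst card_PiE_dflt) auto

lemma range_draw_seq: "Y \<in> draw_seqs n m \<Longrightarrow> Y ` {..<m} \<subseteq> {..<n}"
  unfolding draw_seqs_def PiE_dflt_def by auto

lemma card_size_subsets_supersets: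
  assumes R: "R \<subseteq> {..<n}" "card R \<le> m"
  shows "card {Z \<in> size_subsets n m. R \<subseteq> Z} = (n - card R) choose (m - card R)"
proof -
  have finR: "finite R" using R finite_subset by blast
  have "bij_betw (\<lambda>Z. Z - R) {Z \<in> size_subsets n m. R \<subseteq> Z} {W. W \<subseteq> {..<n} - R \<and> card W = m - card R}"
  proof (rule bij_betw_byWitness[where f' = "\<lambda>W. W \<union> R"])
    show "(\<lambda>Z. Z - R) ` {Z \<in> size_subsets n m. R \<subseteq> Z} \<subseteq> {W. W \<subseteq> {..<n} - R \<and> card W = m - card R}"
      using finR by (auto simp: size_subsets_def card_Diff_subset)
    show "(\<lambda>W. W \<union> R) ` {W. W \<subseteq> {..<n} - R \<and> card W = m - card R} \<subseteq> {Z \<in> size_subsets n m. R \<subseteq> Z}"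
    proof clarify
      fix W assume W: "W \<subseteq> {..<n} - R" "card W = m - card R"
      then have "finite W" "W \<inter> R = {}" using finite_subset by auto
      then have "card (W \<union> R) = m" using W R finR by (simp add: card_Un_disjoint)
      then show "W \<union> R \<in> size_subsets n m \<and> R \<subseteq> W \<union> R" using W R unfolding size_subsets_def by auto
    qed
  qed auto
  then have "card {Z \<in> size_subsets n m. R \<subseteq> Z} = card {W. W \<subseteq> {..<n} - R \<and> card W = m - card R}"
    by (rule bij_betw_same_card)
  also have "\<dots> = (n - card R) choose (m - card R)"
    using R finR by (simp add: n_subsets card_Diff_subset)
  finally show ?thesis .
qed

lemma sum_cover_weight:
  assumes Y: "Y \<in> draw_seqs n m" and "m \<le> n"
  shows "(\<Sum>Z\<in>size_subsets n m. cover_weight n m Y Z) = 1"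
proof -
  define R where "R = Y ` {..<m}"
  have R: "R \<subseteq> {..<n}" "card R \<le> m"
    using range_draw_seq[OF Y] card_image_le[of "{..<m}" Y] unfolding R_def by auto
  have "(\<Sum>Z\<in>size_subsets n m. cover_weight n m Y Z)
      = (\<Sum>Z\<in>{Z \<in> size_subsets n m. R \<subseteq> Z}. 1 / real ((n - card R) choose (m - card R)))"
    unfolding cover_weight_def R_def[symmetric] by (simp add: sum.inter_filter[symmetric] finite_size_subsets)
  also have "\<dots> = 1"
    using card_size_subsets_supersets[OF R] R \<open>m \<le> n\<close> by (simp add: zero_less_binomial_iff)
  finally show ?thesis .
qed

lemma relabel_draws_in_draw_seqs:
  assumes "bij_betw \<sigma> {..<n} {..<n}" "Y \<in> draw_seqs n m"
  shows "relabel_draws m \<sigma> Y \<in> draw_seqs n m"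
  using assms bij_betw_apply[OF assms(1)]
  unfolding draw_seqs_def PiE_dflt_def relabel_draws_def by auto

lemma bij_betw_relabel_draws:
  assumes \<sigma>: "bij_betw \<sigma> {..<n} {..<n}"
  shows "bij_betw (relabel_draws m \<sigma>) (draw_seqs n m) (draw_seqs n m)"
proof (rule bij_betw_byWitness[where f' = "relabel_draws m (inv_into {..<n} \<sigma>)"])
  have \<sigma>': "bij_betw (inv_into {..<n} \<sigma>) {..<n} {..<n}" using \<sigma> by (rule bij_betw_inv_into)
  show "\<forall>Y\<in>draw_seqs n m. relabel_draws m (inv_into {..<n} \<sigma>) (relabel_draws m \<sigma> Y) = Y"
    using \<sigma> by (auto simp: relabel_draws_def draw_seqs_def PiE_dflt_def bij_betw_def inv_into_f_f)
  show "\<forall>Y\<in>draw_seqs n m. relabel_draws m \<sigma> (relabel_draws m (inv_into {..<n} \<sigma>) Y) = Y"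
    using \<sigma> by (auto simp: relabel_draws_def draw_seqs_def PiE_dflt_def bij_betw_def f_inv_into_f)
  show "relabel_draws m \<sigma> ` draw_seqs n m \<subseteq> draw_seqs n m"
    using relabel_draws_in_draw_seqs[OF \<sigma>] by blast
  show "relabel_draws m (inv_into {..<n} \<sigma>) ` draw_seqs n m \<subseteq> draw_seqs n m"
    using relabel_draws_in_draw_seqs[OF \<sigma>'] by blast
qed

lemma cover_weight_relabel_draws:
  assumes \<sigma>: "bij_betw \<sigma> {..<n} {..<n}" and Y: "Y \<in> draw_seqs n m" and Z: "Z \<subseteq> {..<n}"
  shows "cover_weight n m (relabel_draws m \<sigma> Y) (\<sigma> ` Z) = cover_weight n m Y Z"
proof -
  have inj: "inj_on \<sigma> {..<n}" using \<sigma> bij_betw_def by blast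
  have R: "Y ` {..<m} \<subseteq> {..<n}" by (rule range_draw_seq[OF Y])
  have range: "relabel_draws m \<sigma> Y ` {..<m} = \<sigma> ` (Y ` {..<m})"
    unfolding relabel_draws_def image_image by (intro image_cong) auto
  have "card (\<sigma> ` (Y ` {..<m})) = card (Y ` {..<m})"
    by (rule card_image[OF inj_on_subset[OF inj R]])
  moreover have "\<sigma> ` (Y ` {..<m}) \<subseteq> \<sigma> ` Z \<longleftrightarrow> Y ` {..<m} \<subseteq> Z"
    using inj_on_image_mem_iff[OF inj _ Z] R by blast
  ultimately show ?thesis unfolding cover_weight_def range by simp
qed

lemma draw_count_relabel_draws:
  assumes \<sigma>: "bij_betw \<sigma> {..<n} {..<n}" and Y: "Y \<in> draw_seqs n m" and "a < n"
  shows "draw_count m (relabel_draws m \<sigma> Y) (\<sigma> a) = draw_count m Y a"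
proof -
  have "inj_on \<sigma> {..<n}" using \<sigma> bij_betw_def by blast
  then have "{l\<in>{..<m}. relabel_draws m \<sigma> Y l = \<sigma> a} = {l\<in>{..<m}. Y l = a}"
    using range_draw_seq[OF Y] \<open>a < n\<close> unfolding relabel_draws_def inj_on_def by auto
  then show ?thesis unfolding draw_count_def by simp
qed

lemma exists_permutation_image_eq:
  assumes "Z \<in> size_subsets n m" "Z' \<in> size_subsets n m"
  shows "\<exists>\<sigma>. bij_betw \<sigma> {..<n} {..<n} \<and> \<sigma> ` Z = Z'"
proof -
  have fZ: "finite Z" "finite Z'" "Z \<subseteq> {..<n}" "Z' \<subseteq> {..<n}" "card Z = card Z'"
    using assms unfolding size_subsets_def by (auto intro: finite_subset)
  obtain g where g: "bij_betw g Z Z'" using fZ finite_same_card_bij[of Z Z'] by blast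
  have "card ({..<n} - Z) = card ({..<n} - Z')" using fZ by (simp add: card_Diff_subset)
  then obtain h where h: "bij_betw h ({..<n} - Z) ({..<n} - Z')"
    using finite_same_card_bij[of "{..<n} - Z" "{..<n} - Z'"] by auto
  define \<sigma> where "\<sigma> a = (if a \<in> Z then g a else h a)" for a
  have "bij_betw \<sigma> Z Z'" using g unfolding \<sigma>_def by (rule bij_betw_cong[THEN iffD1, rotated]) auto
  moreover have "bij_betw \<sigma> ({..<n} - Z) ({..<n} - Z')" using h unfolding \<sigma>_def
    by (rule bij_betw_cong[THEN iffD1, rotated]) auto
  ultimately have "bij_betw \<sigma> (Z \<union> ({..<n} - Z)) (Z' \<union> ({..<n} - Z'))"
    by (rule bij_betw_combine) auto
  moreover have "Z \<union> ({..<n} - Z) = {..<n}" "Z' \<union> ({..<n} - Z') = {..<n}" using fZ by auto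
  ultimately show ?thesis using \<open>bij_betw \<sigma> Z Z'\<close> by (auto simp: bij_betw_def)
qed

text \<open>Every \<open>m\<close>-subset receives the same total weight, by symmetry; double counting identifies it.\<close>

lemma sum_draw_seqs_cover_weight:
  assumes Z: "Z \<in> size_subsets n m" and "m \<le> n"
  shows "(\<Sum>Y\<in>draw_seqs n m. cover_weight n m Y Z) = real (n ^ m) / real (n choose m)"
proof -
  define w where "w Z = (\<Sum>Y\<in>draw_seqs n m. cover_weight n m Y Z)" for Z
  have w_perm: "w (\<sigma> ` Z) = w Z" if \<sigma>: "bij_betw \<sigma> {..<n} {..<n}" and "Z \<subseteq> {..<n}" for \<sigma> Z
  proof -
    have "w (\<sigma> ` Z) = (\<Sum>Y\<in>draw_seqs n m. cover_weight n m (relabel_draws m \<sigma> Y) (\<sigma> ` Z))"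
      unfolding w_def by (rule sum.reindex_bij_betw[OF bij_betw_relabel_draws[OF \<sigma>], symmetric])
    also have "\<dots> = w Z"
      unfolding w_def using that by (intro sum.cong refl cover_weight_relabel_draws)
    finally show ?thesis .
  qed
  have w_const: "w Z' = w Z" if "Z' \<in> size_subsets n m" for Z'
    using exists_permutation_image_eq[OF that Z] w_perm that
    by (metis (mono_tags, lifting) mem_Collect_eq size_subsets_def)
  have "real (n ^ m) = (\<Sum>Y\<in>draw_seqs n m. \<Sum>Z\<in>size_subsets n m. cover_weight n m Y Z)"
    using sum_cover_weight[OF _ \<open>m \<le> n\<close>] by (simp add: card_draw_seqs[symmetric])
  also have "\<dots> = (\<Sum>Z'\<in>size_subsets n m. w Z')" unfolding w_def by (rule sum.swap)
  also have "\<dots> = w Z * real (n choose m)" by (simp add: w_const card_size_subsets)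
  finally show ?thesis
    using \<open>m \<le> n\<close> unfolding w_def by (simp add: field_simps zero_less_binomial_iff)
qed

lemma sum_draw_count:
  assumes "Y ` {..<m} \<subseteq> Z" "finite Z"
  shows "(\<Sum>a\<in>Z. draw_count m Y a) = real m"
proof -
  have "(\<Sum>a\<in>Z. card {l\<in>{..<m}. Y l = a}) = card (\<Union>a\<in>Z. {l\<in>{..<m}. Y l = a})"
    by (rule card_UN_disjoint[symmetric]) (use assms in auto)
  also have "(\<Union>a\<in>Z. {l\<in>{..<m}. Y l = a}) = {..<m}" using assms by auto
  finally show ?thesis unfolding draw_count_def by (simp flip: of_nat_sum)
qed

lemma sum_draw_count_weighted:
  assumes "\<And>l. l < m \<Longrightarrow> Y l < n"
  shows "(\<Sum>a<n. draw_count m Y a * F a) = (\<Sum>l<m. F (Y l))"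
proof -
  have "(\<Sum>a<n. draw_count m Y a * F a) = (\<Sum>a<n. \<Sum>l<m. if Y l = a then F a else 0)"
    unfolding draw_count_def by (simp add: sum.If_cases sum_distrib_right[symmetric] Int_def)
  also have "\<dots> = (\<Sum>l<m. F (Y l))"
    using assms by (subst sum.swap) (simp add: sum.delta')
  finally show ?thesis .
qed

text \<open>Transposing two points of \<open>Z\<close> permutes the draw sequences and fixes all cover weights of \<open>Z\<close>.\<close>

lemma sum_cover_weight_draw_count_swap:
  assumes Z: "Z \<in> size_subsets n m" and "a \<in> Z" "b \<in> Z"
  shows "(\<Sum>Y\<in>draw_seqs n m. cover_weight n m Y Z * draw_count m Y b)
         = (\<Sum>Y\<in>draw_seqs n m. cover_weight n m Y Z * draw_count m Y a)"
proof -
  have Zn: "Z \<subseteq> {..<n}" using Z unfolding size_subsets_def by auto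
  have \<tau>: "bij_betw (Transposition.transpose a b) {..<n} {..<n}"
    by (rule bij_betw_transpose_iff) (use assms Zn in auto)
  have "(\<Sum>Y\<in>draw_seqs n m. cover_weight n m Y Z * draw_count m Y b)
      = (\<Sum>Y\<in>draw_seqs n m. cover_weight n m (relabel_draws m (Transposition.transpose a b) Y) Z
           * draw_count m (relabel_draws m (Transposition.transpose a b) Y) b)"
    by (rule sum.reindex_bij_betw[OF bij_betw_relabel_draws[OF \<tau>], symmetric])
  also have "\<dots> = (\<Sum>Y\<in>draw_seqs n m. cover_weight n m Y Z * draw_count m Y a)"
  proof (intro sum.cong refl)
    fix Y assume Y: "Y \<in> draw_seqs n m"
    have "a < n" using assms Zn by auto
    then show "cover_weight n m (relabel_draws m (Transposition.transpose a b) Y) Z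
                 * draw_count m (relabel_draws m (Transposition.transpose a b) Y) b
               = cover_weight n m Y Z * draw_count m Y a"
      using cover_weight_relabel_draws[OF \<tau> Y Zn] draw_count_relabel_draws[OF \<tau> Y, of a] assms
      by simp
  qed
  finally show ?thesis .
qed

lemma sum_cover_weight_draw_count:
  assumes Z: "Z \<in> size_subsets n m" and "1 \<le> m" "m \<le> n"
  shows "(\<Sum>Y\<in>draw_seqs n m. cover_weight n m Y Z * draw_count m Y a)
         = real (n ^ m) / real (n choose m) * indicator Z a"
proof -
  define v where "v a = (\<Sum>Y\<in>draw_seqs n m. cover_weight n m Y Z * draw_count m Y a)" for a
  have Zn: "Z \<subseteq> {..<n}" "finite Z" "card Z = m"
    using Z unfolding size_subsets_def by (auto intro: finite_subset)
  have v_swap: "v b = v a" if "a \<in> Z" "b \<in> Z" for a b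
    using sum_cover_weight_draw_count_swap[OF Z that] unfolding v_def .
  show ?thesis
  proof (cases "a \<in> Z")
    case True
    have "real m * v a = (\<Sum>b\<in>Z. v b)" using v_swap[OF True] Zn by simp
    also have "\<dots> = (\<Sum>Y\<in>draw_seqs n m. cover_weight n m Y Z * (\<Sum>b\<in>Z. draw_count m Y b))"
      unfolding v_def by (simp add: sum_distrib_left sum.swap[of _ Z])
    also have "\<dots> = real m * (\<Sum>Y\<in>draw_seqs n m. cover_weight n m Y Z)"
      unfolding sum_distrib_left
      by (intro sum.cong refl) (auto simp: cover_weight_def sum_draw_count Zn sum_divide_distrib[symmetric])
    finally have "v a = (\<Sum>Y\<in>draw_seqs n m. cover_weight n m Y Z)"
      using \<open>1 \<le> m\<close> by simp
    then show ?thesis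
      using True unfolding v_def by (simp add: sum_draw_seqs_cover_weight[OF Z \<open>m \<le> n\<close>])
  next
    case False
    then show ?thesis by (auto simp: cover_weight_def draw_count_def image_subset_iff intro!: sum.neutral)
  qed
qed

text \<open>Function spaces are not real vector spaces in the library, so convexity is stated
  directly as Jensen's inequality for the finite mixtures that occur, indexed by draw sequences.\<close>

definition jensen_on_mixtures :: "((nat \<Rightarrow> real) \<Rightarrow> real) \<Rightarrow> bool" where
  "jensen_on_mixtures G \<longleftrightarrow> (\<forall>(A::(nat \<Rightarrow> nat) set) \<mu> u. finite A \<longrightarrow> (\<forall>y\<in>A. 0 \<le> \<mu> y) \<longrightarrow>
      sum \<mu> A = 1 \<longrightarrow> G (\<lambda>a. \<Sum>y\<in>A. \<mu> y * u y a) \<le> (\<Sum>y\<in>A. \<mu> y * G (u y)))"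

lemma jensen_indicator_le_sum_cover_weight:
  assumes G: "jensen_on_mixtures G" and Z: "Z \<in> size_subsets n m" and "1 \<le> m" "m \<le> n"
  shows "real (n ^ m) / real (n choose m) * G (indicator Z)
         \<le> (\<Sum>Y\<in>draw_seqs n m. cover_weight n m Y Z * G (draw_count m Y))"
proof -
  define \<kappa> where "\<kappa> = real (n ^ m) / real (n choose m)"
  have "real (n choose m) > 0" using assms by (simp add: zero_less_binomial_iff)
  then have "\<kappa> > 0" unfolding \<kappa>_def using assms by simp
  define \<mu> where "\<mu> Y = cover_weight n m Y Z / \<kappa>" for Y
  have "(\<lambda>a. \<Sum>Y\<in>draw_seqs n m. \<mu> Y * draw_count m Y a) = indicator Z"
  proof
    fix a
    have "(\<Sum>Y\<in>draw_seqs n m. \<mu> Y * draw_count m Y a)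
        = (\<Sum>Y\<in>draw_seqs n m. cover_weight n m Y Z * draw_count m Y a) / \<kappa>"
      by (simp add: \<mu>_def sum_divide_distrib)
    then show "(\<Sum>Y\<in>draw_seqs n m. \<mu> Y * draw_count m Y a) = indicator Z a"
      using sum_cover_weight_draw_count[OF Z assms(3,4)] \<open>\<kappa> > 0\<close> assms(4) by (simp add: \<kappa>_def)
  qed
  moreover have "sum \<mu> (draw_seqs n m) = (\<Sum>Y\<in>draw_seqs n m. cover_weight n m Y Z) / \<kappa>"
    by (simp add: \<mu>_def sum_divide_distrib)
  then have "sum \<mu> (draw_seqs n m) = 1"
    using sum_draw_seqs_cover_weight[OF Z assms(4)] \<open>\<kappa> > 0\<close> assms(3,4) by (simp add: \<kappa>_def)
  moreover have "\<forall>Y\<in>draw_seqs n m. 0 \<le> \<mu> Y"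
    using \<open>\<kappa> > 0\<close> by (simp add: \<mu>_def cover_weight_def)
  ultimately have "G (indicator Z) \<le> (\<Sum>Y\<in>draw_seqs n m. \<mu> Y * G (draw_count m Y))"
    using G[unfolded jensen_on_mixtures_def, rule_format, of "draw_seqs n m" \<mu> "draw_count m"]
    by (simp add: finite_draw_seqs)
  also have "\<dots> = (\<Sum>Y\<in>draw_seqs n m. cover_weight n m Y Z * G (draw_count m Y)) / \<kappa>"
    by (simp add: \<mu>_def sum_divide_distrib)
  finally show ?thesis
    using \<open>\<kappa> > 0\<close> unfolding \<kappa>_def[symmetric] by (simp add: pos_le_divide_eq mult.commute)
qed

theorem avg_size_subsets_le_avg_draw_seqs:
  assumes G: "jensen_on_mixtures G" and "1 \<le> m" "m \<le> n"
  shows "avg (size_subsets n m) (\<lambda>Z. G (indicator Z)) \<le> avg (draw_seqs n m) (\<lambda>Y. G (draw_count m Y))"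
proof -
  define \<kappa> where "\<kappa> = real (n ^ m) / real (n choose m)"
  have "real (n choose m) > 0" using assms by (simp add: zero_less_binomial_iff)
  have mix: "\<kappa> * G (indicator Z) \<le> (\<Sum>Y\<in>draw_seqs n m. cover_weight n m Y Z * G (draw_count m Y))"
    if "Z \<in> size_subsets n m" for Z
    unfolding \<kappa>_def by (rule jensen_indicator_le_sum_cover_weight[OF G that assms(2,3)])
  have "avg (size_subsets n m) (\<lambda>Z. G (indicator Z))
      = \<kappa> * (\<Sum>Z\<in>size_subsets n m. G (indicator Z)) / real (n ^ m)"
    using \<open>real (n choose m) > 0\<close> by (simp add: avg_def card_size_subsets \<kappa>_def)
  also have "\<dots> \<le> (\<Sum>Z\<in>size_subsets n m. \<Sum>Y\<in>draw_seqs n m. cover_weight n m Y Z * G (draw_count m Y))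
                    / real (n ^ m)"
    unfolding sum_distrib_left by (intro divide_right_mono sum_mono mix) auto
  also have "\<dots> = (\<Sum>Y\<in>draw_seqs n m. (\<Sum>Z\<in>size_subsets n m. cover_weight n m Y Z) * G (draw_count m Y))
                    / real (n ^ m)"
    by (subst sum.swap) (simp add: sum_distrib_right)
  also have "\<dots> = avg (draw_seqs n m) (\<lambda>Y. G (draw_count m Y))"
    by (simp add: avg_def card_draw_seqs sum_cover_weight[OF _ assms(3)])
  finally show ?thesis .
qed

definition jensen_on_matrix_mixtures :: "((nat \<Rightarrow> nat \<Rightarrow> real) \<Rightarrow> real) \<Rightarrow> bool" where
  "jensen_on_matrix_mixtures G \<longleftrightarrow> (\<forall>(A::(nat \<Rightarrow> nat) set) \<mu> u. finite A \<longrightarrow> (\<forall>y\<in>A. 0 \<le> \<mu> y) \<longrightarrow>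
      sum \<mu> A = 1 \<longrightarrow> G (\<lambda>i a. \<Sum>y\<in>A. \<mu> y * u y i a) \<le> (\<Sum>y\<in>A. \<mu> y * G (u y)))"

lemma jensen_on_mixtures_row:
  assumes G: "jensen_on_matrix_mixtures G"
  shows "jensen_on_mixtures (\<lambda>u. G (M(i := u)))"
  unfolding jensen_on_mixtures_def
proof (intro allI impI)
  fix A :: "(nat \<Rightarrow> nat) set" and \<mu> :: "(nat \<Rightarrow> nat) \<Rightarrow> real" and u
  assume A: "finite A" "\<forall>y\<in>A. 0 \<le> \<mu> y" "sum \<mu> A = 1"
  have "M(i := (\<lambda>a. \<Sum>y\<in>A. \<mu> y * u y a)) = (\<lambda>i' a. \<Sum>y\<in>A. \<mu> y * (M(i := u y)) i' a)"
    using A(3) by (auto simp: fun_eq_iff sum_distrib_right[symmetric])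
  then show "G (M(i := (\<lambda>a. \<Sum>y\<in>A. \<mu> y * u y a))) \<le> (\<Sum>y\<in>A. \<mu> y * G (M(i := u y)))"
    using G[unfolded jensen_on_matrix_mixtures_def, rule_format, of A \<mu> "\<lambda>y. M(i := u y)"] A by simp
qed

lemma jensen_on_matrix_mixtures_fix_row:
  assumes G: "jensen_on_matrix_mixtures G"
  shows "jensen_on_matrix_mixtures (\<lambda>M. G (M(i := c)))"
  unfolding jensen_on_matrix_mixtures_def
proof (intro allI impI)
  fix A :: "(nat \<Rightarrow> nat) set" and \<mu> :: "(nat \<Rightarrow> nat) \<Rightarrow> real" and u
  assume A: "finite A" "\<forall>y\<in>A. 0 \<le> \<mu> y" "sum \<mu> A = 1"
  have "(\<lambda>i a. \<Sum>y\<in>A. \<mu> y * u y i a)(i := c) = (\<lambda>i' a. \<Sum>y\<in>A. \<mu> y * ((u y)(i := c)) i' a)"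
    using A(3) by (auto simp: fun_eq_iff sum_distrib_right[symmetric])
  then show "G ((\<lambda>i a. \<Sum>y\<in>A. \<mu> y * u y i a)(i := c)) \<le> (\<Sum>y\<in>A. \<mu> y * G ((u y)(i := c)))"
    using G[unfolded jensen_on_matrix_mixtures_def, rule_format, of A \<mu> "\<lambda>y. (u y)(i := c)"] A by simp
qed

definition subsample_matrix :: "nat set \<Rightarrow> (nat \<Rightarrow> nat set) \<Rightarrow> nat \<Rightarrow> nat \<Rightarrow> real" where
  "subsample_matrix I J i a = (if i \<in> I then indicator (J i) a else 0)"

definition draw_matrix :: "nat \<Rightarrow> nat set \<Rightarrow> (nat \<Rightarrow> nat \<Rightarrow> nat) \<Rightarrow> nat \<Rightarrow> nat \<Rightarrow> real" where
  "draw_matrix m I Y i a = (if i \<in> I then draw_count m (Y i) a else 0)"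

theorem avg_subsamples_le_avg_draws:
  assumes "finite I" and "jensen_on_matrix_mixtures G" and "1 \<le> m" "m \<le> n"
  shows "avg (PiE_dflt I {} (\<lambda>_. size_subsets n m)) (\<lambda>J. G (subsample_matrix I J))
         \<le> avg (PiE_dflt I (\<lambda>_. 0) (\<lambda>_. draw_seqs n m)) (\<lambda>Y. G (draw_matrix m I Y))"
  using assms(1,2)
proof (induction I arbitrary: G rule: finite_induct)
  case empty
  have e: "PiE_dflt {} {} (\<lambda>_. size_subsets n m) = {\<lambda>_. {}}"
    "PiE_dflt {} (\<lambda>_. 0) (\<lambda>_. draw_seqs n m) = {\<lambda>_ _. 0}"
    by (auto simp: PiE_dflt_def)
  show ?case unfolding avg_def e by (simp add: subsample_matrix_def draw_matrix_def)
next
  case (insert i I)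
  let ?PZ = "PiE_dflt I {} (\<lambda>_. size_subsets n m)" and ?PY = "PiE_dflt I (\<lambda>_. 0) (\<lambda>_. draw_seqs n m)"
  have subsample_upd: "subsample_matrix (insert i I) (J(i := Z)) = (subsample_matrix I J)(i := indicator Z)"
    for J Z using insert.hyps by (auto simp: subsample_matrix_def fun_eq_iff)
  have draw_upd: "draw_matrix m (insert i I) (Y(i := y)) = (draw_matrix m I Y)(i := draw_count m y)"
    for Y y using insert.hyps by (auto simp: draw_matrix_def fun_eq_iff)
  have "avg (PiE_dflt (insert i I) {} (\<lambda>_. size_subsets n m)) (\<lambda>J. G (subsample_matrix (insert i I) J))
      = avg (size_subsets n m) (\<lambda>Z. avg ?PZ (\<lambda>J. G ((subsample_matrix I J)(i := indicator Z))))"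
    using insert.hyps finite_size_subsets by (simp add: avg_PiE_dflt_insert subsample_upd)
  also have "\<dots> = avg ?PZ (\<lambda>J. avg (size_subsets n m) (\<lambda>Z. G ((subsample_matrix I J)(i := indicator Z))))"
    by (rule avg_swap)
  also have "\<dots> \<le> avg ?PZ (\<lambda>J. avg (draw_seqs n m) (\<lambda>y. G ((subsample_matrix I J)(i := draw_count m y))))"
    using assms(3,4) insert.prems
    by (intro avg_mono avg_size_subsets_le_avg_draw_seqs jensen_on_mixtures_row)
  also have "\<dots> = avg (draw_seqs n m) (\<lambda>y. avg ?PZ (\<lambda>J. G ((subsample_matrix I J)(i := draw_count m y))))"
    by (rule avg_swap)
  also have "\<dots> \<le> avg (draw_seqs n m) (\<lambda>y. avg ?PY (\<lambda>Y. G ((draw_matrix m I Y)(i := draw_count m y))))"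
    using insert.prems by (intro avg_mono insert.IH jensen_on_matrix_mixtures_fix_row)
  also have "\<dots> = avg (PiE_dflt (insert i I) (\<lambda>_. 0) (\<lambda>_. draw_seqs n m)) (\<lambda>Y. G (draw_matrix m (insert i I) Y))"
    using insert.hyps finite_draw_seqs by (simp add: avg_PiE_dflt_insert draw_upd)
  finally show ?case .
qed

section \<open>The Sauer--Shelah lemma\<close>

definition shatters_family :: "'x set set \<Rightarrow> 'x set \<Rightarrow> bool" where
  "shatters_family F A \<longleftrightarrow> (\<forall>B\<subseteq>A. \<exists>c\<in>F. c \<inter> A = B)"

lemma card_eq_card_delete_plus_card_pairs:
  assumes "finite F"
  shows "card F = card ((\<lambda>c. c - {x}) ` F) + card {c \<in> F. x \<notin> c \<and> insert x c \<in> F}"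
proof -
  define A where "A = {c \<in> F. x \<notin> c}"
  define B where "B = {c \<in> F. x \<in> c}"
  have fin: "finite A" "finite B" using assms unfolding A_def B_def by auto
  have "card F = card (A \<union> B)" unfolding A_def B_def by (rule arg_cong[where f = card]) auto
  also have "\<dots> = card A + card B" using fin by (intro card_Un_disjoint) (auto simp: A_def B_def)
  also have "card B = card ((\<lambda>c. c - {x}) ` B)"
    unfolding B_def by (intro card_image[symmetric] inj_onI) blast
  also have "card A + \<dots> = card (A \<union> (\<lambda>c. c - {x}) ` B) + card (A \<inter> (\<lambda>c. c - {x}) ` B)"
    using fin by (intro card_Un_Int) auto
  also have "A \<union> (\<lambda>c. c - {x}) ` B = (\<lambda>c. c - {x}) ` F"
    unfolding A_def B_def by auto
  also have "A \<inter> (\<lambda>c. c - {x}) ` B = {c \<in> F. x \<notin> c \<and> insert x c \<in> F}"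
  proof (intro equalityI subsetI)
    fix c assume "c \<in> A \<inter> (\<lambda>c. c - {x}) ` B"
    then obtain b where "c \<in> A" "b \<in> B" "c = b - {x}" by auto
    then show "c \<in> {c \<in> F. x \<notin> c \<and> insert x c \<in> F}" unfolding A_def B_def by (auto simp: insert_absorb)
  next
    fix c assume c: "c \<in> {c \<in> F. x \<notin> c \<and> insert x c \<in> F}"
    then have "insert x c \<in> B" "c = insert x c - {x}" unfolding B_def by auto
    then show "c \<in> A \<inter> (\<lambda>c. c - {x}) ` B" using c unfolding A_def by blast
  qed
  finally show ?thesis .
qed

lemma shatters_family_delete:
  assumes "shatters_family ((\<lambda>c. c - {x}) ` F) A" "x \<notin> A"
  shows "shatters_family F A"
  unfolding shatters_family_def
proof (intro allI impI)
  fix B assume "B \<subseteq> A"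
  then obtain c where "c \<in> F" "(c - {x}) \<inter> A = B"
    using assms(1) unfolding shatters_family_def by auto
  moreover have "(c - {x}) \<inter> A = c \<inter> A" using assms(2) by auto
  ultimately show "\<exists>c\<in>F. c \<inter> A = B" by auto
qed

lemma shatters_family_insert:
  assumes "shatters_family {c \<in> F. x \<notin> c \<and> insert x c \<in> F} A" "x \<notin> A"
  shows "shatters_family F (insert x A)"
  unfolding shatters_family_def
proof (intro allI impI)
  fix B assume B: "B \<subseteq> insert x A"
  then have "B - {x} \<subseteq> A" by auto
  with assms(1) obtain c where "c \<in> {c \<in> F. x \<notin> c \<and> insert x c \<in> F}" "c \<inter> A = B - {x}"
    unfolding shatters_family_def by blast
  then have c: "c \<in> F" "x \<notin> c" "insert x c \<in> F" "c \<inter> A = B - {x}" by auto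
  show "\<exists>c\<in>F. c \<inter> insert x A = B"
  proof (cases "x \<in> B")
    case True
    then have "insert x c \<inter> insert x A = B" using c B by auto
    then show ?thesis using c by blast
  next
    case False
    then have "c \<inter> insert x A = B" using c B by auto
    then show ?thesis using c by blast
  qed
qed

theorem card_le_card_shattered:
  assumes "finite P" "F \<subseteq> Pow P"
  shows "card F \<le> card {A. A \<subseteq> P \<and> shatters_family F A}"
  using assms
proof (induction P arbitrary: F rule: finite_induct)
  case empty
  then have "F = {} \<or> F = {{}}" by auto
  then show ?case
  proof
    assume "F = {{}}"
    then have "{{}} \<subseteq> {A. A \<subseteq> {} \<and> shatters_family F A}" by (auto simp: shatters_family_def)
    then have "card {{}::'a set} \<le> card {A. A \<subseteq> {} \<and> shatters_family F A}"
      by (intro card_mono) auto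
    then show ?case using \<open>F = {{}}\<close> by simp
  qed simp
next
  case (insert x P)
  define F\<^sub>0 where "F\<^sub>0 = (\<lambda>c. c - {x}) ` F"
  define F\<^sub>1 where "F\<^sub>1 = {c \<in> F. x \<notin> c \<and> insert x c \<in> F}"
  define S\<^sub>0 where "S\<^sub>0 = {A. A \<subseteq> P \<and> shatters_family F\<^sub>0 A}"
  define S\<^sub>1 where "S\<^sub>1 = {A. A \<subseteq> P \<and> shatters_family F\<^sub>1 A}"
  have "finite F" using insert by (meson finite_Pow_iff finite_insert finite_subset)
  have fin: "finite S\<^sub>0" "finite S\<^sub>1" unfolding S\<^sub>0_def S\<^sub>1_def using insert.hyps(1) by auto
  have "card F = card F\<^sub>0 + card F\<^sub>1"
    unfolding F\<^sub>0_def F\<^sub>1_def by (rule card_eq_card_delete_plus_card_pairs[OF \<open>finite F\<close>])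
  also have "\<dots> \<le> card S\<^sub>0 + card S\<^sub>1"
    unfolding S\<^sub>0_def S\<^sub>1_def F\<^sub>0_def F\<^sub>1_def using insert.prems by (intro add_mono insert.IH) auto
  also have "card S\<^sub>1 = card (insert x ` S\<^sub>1)"
    using insert.hyps(2) unfolding S\<^sub>1_def
    by (intro card_image[symmetric] inj_onI) (metis (no_types, lifting) Diff_insert_absorb mem_Collect_eq subset_iff)
  also have "card S\<^sub>0 + card (insert x ` S\<^sub>1) = card (S\<^sub>0 \<union> insert x ` S\<^sub>1)"
    using fin insert.hyps(2) unfolding S\<^sub>0_def by (intro card_Un_disjoint[symmetric]) auto
  also have "\<dots> \<le> card {A. A \<subseteq> insert x P \<and> shatters_family F A}"
    using insert.hyps(1,2)
    by (intro card_mono) (auto simp: S\<^sub>0_def S\<^sub>1_def F\<^sub>0_def F\<^sub>1_def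
        intro: shatters_family_delete shatters_family_insert)
  finally show ?case .
qed

lemma card_subsets_card_le:
  assumes "finite P"
  shows "card {A. A \<subseteq> P \<and> card A \<le> d} = (\<Sum>j\<le>d. card P choose j)"
proof -
  have "{A. A \<subseteq> P \<and> card A \<le> d} = (\<Union>j\<in>{..d}. {A. A \<subseteq> P \<and> card A = j})" by auto
  moreover have "card (\<Union>j\<in>{..d}. {A. A \<subseteq> P \<and> card A = j}) = (\<Sum>j\<le>d. card {A. A \<subseteq> P \<and> card A = j})"
    by (rule card_UN_disjoint) (use assms in auto)
  ultimately show ?thesis using n_subsets[OF assms] by simp
qed

theorem card_traces_le_sum_choose:
  fixes H :: "('x \<Rightarrow> bool) set"
  assumes P: "finite P" and vc: "\<And>A. A \<subseteq> P \<Longrightarrow> shatters H A \<Longrightarrow> card A \<le> d"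
  shows "card ((\<lambda>h. {x\<in>P. h x}) ` H) \<le> (\<Sum>j\<le>d. card P choose j)"
proof -
  let ?F = "(\<lambda>h. {x\<in>P. h x}) ` H"
  have "shatters H A" if A: "A \<subseteq> P" "shatters_family ?F A" for A
    unfolding shatters_def
  proof (intro allI impI)
    fix B assume "B \<subseteq> A"
    then obtain h where "h \<in> H" "{x\<in>P. h x} \<inter> A = B"
      using A(2) unfolding shatters_family_def by blast
    moreover have "{x\<in>P. h x} \<inter> A = {x \<in> A. h x}" using A(1) by auto
    ultimately show "\<exists>h\<in>H. {x \<in> A. h x} = B" by auto
  qed
  then have "{A. A \<subseteq> P \<and> shatters_family ?F A} \<subseteq> {A. A \<subseteq> P \<and> card A \<le> d}"
    using vc by blast
  then have "card {A. A \<subseteq> P \<and> shatters_family ?F A} \<le> card {A. A \<subseteq> P \<and> card A \<le> d}"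
    using P by (intro card_mono) auto
  moreover have "card ?F \<le> card {A. A \<subseteq> P \<and> shatters_family ?F A}"
    by (rule card_le_card_shattered[OF P]) auto
  ultimately show ?thesis
    using card_subsets_card_le[OF P] by simp
qed

lemma sum_choose_le_exp_power:
  assumes "1 \<le> d" "d \<le> K"
  shows "real (\<Sum>j\<le>d. K choose j) \<le> (exp 1 * real K / real d) ^ d"
proof -
  define x where "x = real d / real K"
  have x: "0 < x" "x \<le> 1" using assms unfolding x_def by auto
  have "x ^ d * real (\<Sum>j\<le>d. K choose j) = (\<Sum>j\<le>d. real (K choose j) * x ^ d)"
    by (simp add: sum_distrib_left mult.commute)
  also have "\<dots> \<le> (\<Sum>j\<le>d. real (K choose j) * x ^ j)"
    by (intro sum_mono mult_left_mono power_decreasing) (use x in auto)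
  also have "\<dots> \<le> (\<Sum>j\<le>K. real (K choose j) * x ^ j)"
    by (intro sum_mono2) (use assms x in auto)
  also have "\<dots> = (x + 1) ^ K" by (simp add: binomial_ring mult.commute)
  also have "\<dots> \<le> exp x ^ K"
    by (intro power_mono) (use x in \<open>auto simp: add.commute exp_ge_add_one_self\<close>)
  also have "\<dots> = exp (real d)" using assms unfolding x_def by (simp add: exp_of_nat_mult[symmetric])
  finally have "real (\<Sum>j\<le>d. K choose j) \<le> exp (real d) / x ^ d"
    using x by (simp add: pos_le_divide_eq mult.commute)
  also have "exp (real d) / x ^ d = (exp 1 * real K / real d) ^ d"
    unfolding x_def using assms by (simp add: power_divide power_mult_distrib exp_of_nat_mult[symmetric])
  finally show ?thesis .
qed

section \<open>Rademacher averages of finite classes\<close>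

definition sign_vectors :: "'c set \<Rightarrow> ('c \<Rightarrow> real) set" where
  "sign_vectors C = PiE_dflt C 1 (\<lambda>_. {-1, 1})"

definition flip_signs :: "'c set \<Rightarrow> ('c \<Rightarrow> real) \<Rightarrow> 'c \<Rightarrow> real" where
  "flip_signs C s c = (if c \<in> C then - s c else 1)"

lemma finite_sign_vectors: "finite C \<Longrightarrow> finite (sign_vectors C)"
  unfolding sign_vectors_def by auto

lemma sign_vectors_nonempty: "sign_vectors C \<noteq> {}"
  unfolding sign_vectors_def by auto

lemma sign_vector_neq_one: "s \<in> sign_vectors C \<Longrightarrow> s c \<noteq> 1 \<Longrightarrow> s c = -1"
  unfolding sign_vectors_def PiE_dflt_def by blast

lemma avg_flip_signs: "avg (sign_vectors C) (\<lambda>s. F (flip_signs C s)) = avg (sign_vectors C) F"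
  by (rule avg_reindex[symmetric], rule bij_betw_byWitness[where f' = "flip_signs C"])
    (auto simp: flip_signs_def sign_vectors_def PiE_dflt_def)

lemma avg_exp_sign_le:
  assumes "l > 0"
  shows "avg {-1, 1::real} (\<lambda>x. exp (l * (x * v))) \<le> exp (l\<^sup>2 * v\<^sup>2 / 2)"
proof -
  have "avg {-1, 1::real} (\<lambda>x. exp (l * (x * v - avg {-1, 1::real} (\<lambda>x. x * v))))
        \<le> exp (l\<^sup>2 * (\<bar>v\<bar> - - \<bar>v\<bar>)\<^sup>2 / 8)"
    by (rule hoeffdings_lemma_avg[OF _ _ _ assms]) auto
  moreover have "avg {-1, 1::real} (\<lambda>x. x * v) = 0" "(\<bar>v\<bar> - - \<bar>v\<bar>)\<^sup>2 = 4 * v\<^sup>2"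
    by (simp_all add: avg_def power2_eq_square)
  ultimately show ?thesis by simp
qed

lemma avg_exp_rademacher_sum_le:
  assumes "finite C" "l > 0"
  shows "avg (sign_vectors C) (\<lambda>s. exp (l * (\<Sum>c\<in>C. s c * v c))) \<le> exp (l\<^sup>2 * (\<Sum>c\<in>C. (v c)\<^sup>2) / 2)"
proof -
  have "avg (sign_vectors C) (\<lambda>s. exp (l * (\<Sum>c\<in>C. s c * v c)))
      = avg (sign_vectors C) (\<lambda>s. \<Prod>c\<in>C. exp (l * (s c * v c)))"
    using assms by (simp add: sum_distrib_left exp_sum)
  also have "\<dots> = (\<Prod>c\<in>C. avg {-1, 1} (\<lambda>x. exp (l * (x * v c))))"
    unfolding sign_vectors_def using assms by (intro avg_PiE_dflt_prod) auto
  also have "\<dots> \<le> (\<Prod>c\<in>C. exp (l\<^sup>2 * (v c)\<^sup>2 / 2))"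
    using assms by (intro prod_mono conjI avg_exp_sign_le) (auto simp: avg_def)
  also have "\<dots> = exp (l\<^sup>2 * (\<Sum>c\<in>C. (v c)\<^sup>2) / 2)"
    using assms by (simp add: exp_sum[symmetric] sum_distrib_left sum_divide_distrib)
  finally show ?thesis .
qed

text \<open>Optimise over \<open>l\<close>: take \<open>l = x / b\<close>.\<close>

lemma le_sqrt_of_forall_mgf_bound:
  fixes x a b :: real
  assumes bound: "\<And>l. l > 0 \<Longrightarrow> l * x \<le> a + l\<^sup>2 * b / 2" and "0 \<le> a" "0 \<le> b"
  shows "x \<le> sqrt (2 * a * b)"
proof (cases "x > 0")
  case True
  show ?thesis
  proof (cases "b = 0")
    case True
    then show ?thesis using bound[of "(a + 1) / x"] \<open>x > 0\<close> \<open>0 \<le> a\<close> by simp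
  next
    case False
    then have "b > 0" using \<open>0 \<le> b\<close> by simp
    have "x / b * x \<le> a + (x / b)\<^sup>2 * b / 2" using \<open>x > 0\<close> \<open>b > 0\<close> by (intro bound) simp
    then have "x\<^sup>2 \<le> 2 * a * b" using \<open>b > 0\<close> by (simp add: field_simps power2_eq_square)
    then show ?thesis by (rule real_le_rsqrt)
  qed
next
  case False
  then show ?thesis using assms by (meson order.trans not_less real_sqrt_ge_zero mult_nonneg_nonneg zero_le_numeral)
qed

theorem massart_lemma:
  fixes V :: "('c \<Rightarrow> real) set"
  assumes "finite C" "finite V" "V \<noteq> {}" and "real (card V) \<le> N"
    and r: "\<And>v. v \<in> V \<Longrightarrow> (\<Sum>c\<in>C. (v c)\<^sup>2) \<le> r\<^sup>2" "0 \<le> r"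
  shows "avg (sign_vectors C) (\<lambda>s. Max ((\<lambda>v. \<Sum>c\<in>C. s c * v c) ` V)) \<le> r * sqrt (2 * ln N)"
proof -
  define X where "X = (\<lambda>s. Max ((\<lambda>v. \<Sum>c\<in>C. s c * v c) ` V))"
  have "1 \<le> real (card V)" using assms by (simp add: Suc_le_eq card_gt_0_iff)
  then have "1 \<le> N" using assms by linarith
  have "l * avg (sign_vectors C) X \<le> ln N + l\<^sup>2 * r\<^sup>2 / 2" if "l > 0" for l
  proof -
    have "exp (l * avg (sign_vectors C) X) \<le> avg (sign_vectors C) (\<lambda>s. exp (l * X s))"
      unfolding avg_cmult[symmetric] using assms(1) finite_sign_vectors sign_vectors_nonempty
      by (intro exp_avg_le_avg_exp)
    also have "\<dots> \<le> avg (sign_vectors C) (\<lambda>s. \<Sum>v\<in>V. exp (l * (\<Sum>c\<in>C. s c * v c)))"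
    proof (rule avg_mono)
      fix s
      have "X s \<in> (\<lambda>v. \<Sum>c\<in>C. s c * v c) ` V" unfolding X_def using assms by (intro Max_in) auto
      then obtain v where "v \<in> V" "X s = (\<Sum>c\<in>C. s c * v c)" by blast
      then show "exp (l * X s) \<le> (\<Sum>v\<in>V. exp (l * (\<Sum>c\<in>C. s c * v c)))"
        using assms(2) member_le_sum[of v V "\<lambda>v. exp (l * (\<Sum>c\<in>C. s c * v c))"] by simp
    qed
    also have "\<dots> \<le> (\<Sum>v\<in>V. exp (l\<^sup>2 * r\<^sup>2 / 2))"
      unfolding avg_sum using assms \<open>l > 0\<close>
      by (intro sum_mono order.trans[OF avg_exp_rademacher_sum_le]) (auto intro: mult_left_mono divide_right_mono)
    also have "\<dots> \<le> N * exp (l\<^sup>2 * r\<^sup>2 / 2)"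
      using assms by (simp add: mult_right_mono)
    also have "\<dots> = exp (ln N + l\<^sup>2 * r\<^sup>2 / 2)"
      using \<open>1 \<le> N\<close> by (simp add: exp_add)
    finally show ?thesis by simp
  qed
  then have "avg (sign_vectors C) X \<le> sqrt (2 * ln N * r\<^sup>2)"
    using \<open>1 \<le> N\<close> by (intro le_sqrt_of_forall_mgf_bound) auto
  also have "\<dots> = r * sqrt (2 * ln N)"
    using \<open>0 \<le> r\<close> by (simp add: real_sqrt_mult)
  finally show ?thesis unfolding X_def .
qed

definition swap_where_negative :: "('c \<Rightarrow> real) \<Rightarrow> ('c \<Rightarrow> 'a) \<times> ('c \<Rightarrow> 'a) \<Rightarrow> ('c \<Rightarrow> 'a) \<times> ('c \<Rightarrow> 'a)" where
  "swap_where_negative s p =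
     ((\<lambda>c. if s c = 1 then fst p c else snd p c), (\<lambda>c. if s c = 1 then snd p c else fst p c))"

lemma avg_swap_where_negative:
  "avg (PiE_dflt C d B \<times> PiE_dflt C d B) (\<lambda>p. G (swap_where_negative s p))
   = avg (PiE_dflt C d B \<times> PiE_dflt C d B) G"
  by (rule avg_reindex[symmetric], rule bij_betw_byWitness[where f' = "swap_where_negative s"])
    (auto simp: swap_where_negative_def PiE_dflt_def)

lemma avg_Max_centered_rademacher_le:
  fixes g :: "'h \<Rightarrow> 'c \<Rightarrow> real"
  assumes C: "finite C" and H: "finite H" "H \<noteq> {}" and g: "\<And>h c. 0 \<le> g h c \<and> g h c \<le> 1"
    and N: "real (card ((\<lambda>h. restrict (g h) C) ` H)) \<le> N"
  shows "avg (sign_vectors C) (\<lambda>s. Max ((\<lambda>h. \<Sum>c\<in>C. s c * (\<beta> c * (g h c - 1/2))) ` H))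
         \<le> sqrt (\<Sum>c\<in>C. (\<beta> c)\<^sup>2) / 2 * sqrt (2 * ln N)"
proof -
  define V where "V = (\<lambda>h. restrict (\<lambda>c. \<beta> c * (g h c - 1/2)) C) ` H"
  define r where "r = sqrt (\<Sum>c\<in>C. (\<beta> c)\<^sup>2) / 2"
  have "V = (\<lambda>u. restrict (\<lambda>c. \<beta> c * (u c - 1/2)) C) ` (\<lambda>h. restrict (g h) C) ` H"
    unfolding V_def image_image by (intro image_cong) auto
  then have "card V \<le> card ((\<lambda>h. restrict (g h) C) ` H)"
    using H by (simp add: card_image_le)
  then have "real (card V) \<le> N"
    using N by linarith
  moreover have "(\<Sum>c\<in>C. (v c)\<^sup>2) \<le> r\<^sup>2" if "v \<in> V" for v
  proof -
    obtain h where "v = restrict (\<lambda>c. \<beta> c * (g h c - 1/2)) C"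
      using \<open>v \<in> V\<close> unfolding V_def by blast
    then have v: "\<And>c. c \<in> C \<Longrightarrow> v c = \<beta> c * (g h c - 1/2)" by simp
    have "(g h c - 1/2)\<^sup>2 \<le> 1/4" for c
    proof -
      have "(g h c - 1/2)\<^sup>2 = 1/4 - g h c * (1 - g h c)"
        by (simp add: power2_eq_square algebra_simps)
      moreover have "0 \<le> g h c * (1 - g h c)" using g[of h c] by simp
      ultimately show ?thesis by linarith
    qed
    then have "(\<Sum>c\<in>C. (v c)\<^sup>2) \<le> (\<Sum>c\<in>C. (\<beta> c)\<^sup>2 / 4)"
      by (intro sum_mono) (use mult_left_mono[of _ "1/4" "(\<beta> _)\<^sup>2"] in \<open>simp add: v power_mult_distrib\<close>)
    also have "\<dots> = r\<^sup>2" by (simp add: r_def power_divide sum_divide_distrib sum_nonneg)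
    finally show ?thesis .
  qed
  moreover have "Max ((\<lambda>h. \<Sum>c\<in>C. s c * (\<beta> c * (g h c - 1/2))) ` H) = Max ((\<lambda>v. \<Sum>c\<in>C. s c * v c) ` V)" for s
    unfolding V_def image_image by (intro arg_cong[where f = Max] image_cong) auto
  moreover have "finite V" "V \<noteq> {}" "0 \<le> r" using H by (auto simp: V_def r_def sum_nonneg)
  ultimately show ?thesis using massart_lemma[OF C, of V N r] by (simp add: r_def)
qed

text \<open>Exchanging the two samples where \<open>s\<close> is negative turns the difference into a signed sum,
  which centring at \<open>1/2\<close> splits into two Rademacher sums.\<close>

lemma avg_Max_sample_diff_le:
  fixes g :: "'h \<Rightarrow> 'c \<Rightarrow> 'a \<Rightarrow> real" and C :: "'c set" and d :: 'a and B :: "'c \<Rightarrow> 'a set"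
  defines "P \<equiv> PiE_dflt C d B"
  assumes P: "finite P" "P \<noteq> {}" and H: "finite H" "H \<noteq> {}" and s: "s \<in> sign_vectors C"
  shows "avg (P \<times> P) (\<lambda>p. Max ((\<lambda>h. \<Sum>c\<in>C. \<beta> c * (g h c (snd p c) - g h c (fst p c))) ` H))
         \<le> avg P (\<lambda>Y. Max ((\<lambda>h. \<Sum>c\<in>C. s c * (\<beta> c * (g h c (Y c) - 1/2))) ` H))
           + avg P (\<lambda>Y. Max ((\<lambda>h. \<Sum>c\<in>C. flip_signs C s c * (\<beta> c * (g h c (Y c) - 1/2))) ` H))"
proof -
  define R where "R s' Y = Max ((\<lambda>h. \<Sum>c\<in>C. s' c * (\<beta> c * (g h c (Y c) - 1/2))) ` H)" for s' Y
  have swapped: "(\<Sum>c\<in>C. \<beta> c * (g h c (snd (swap_where_negative s p) c) - g h c (fst (swap_where_negative s p) c)))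
      = (\<Sum>c\<in>C. s c * (\<beta> c * (g h c (snd p c) - 1/2)))
        + (\<Sum>c\<in>C. flip_signs C s c * (\<beta> c * (g h c (fst p c) - 1/2)))" for h p
    unfolding sum.distrib[symmetric]
    by (intro sum.cong refl)
      (auto simp: swap_where_negative_def flip_signs_def algebra_simps dest: sign_vector_neq_one[OF s])
  have "avg (P \<times> P) (\<lambda>p. Max ((\<lambda>h. \<Sum>c\<in>C. \<beta> c * (g h c (snd p c) - g h c (fst p c))) ` H))
      = avg (P \<times> P) (\<lambda>p. Max ((\<lambda>h. \<Sum>c\<in>C. \<beta> c * (g h c (snd (swap_where_negative s p) c)
                                                   - g h c (fst (swap_where_negative s p) c))) ` H))"
    unfolding P_def by (rule avg_swap_where_negative[symmetric])
  also have "\<dots> \<le> avg (P \<times> P) (\<lambda>p. R s (snd p) + R (flip_signs C s) (fst p))"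
    unfolding swapped R_def by (intro avg_mono Max_add_le H)
  also have "\<dots> = avg P (R s) + avg P (R (flip_signs C s))"
    using P avg_Times[of P P "\<lambda>_ y. R s y"] avg_Times[of P P "\<lambda>x _. R (flip_signs C s) x"]
    by (simp add: avg_add avg_const)
  finally show ?thesis unfolding R_def .
qed

text \<open>Symmetrisation with a ghost sample, followed by Massart's lemma.\<close>

theorem avg_Max_deviation_le:
  fixes g :: "'h \<Rightarrow> 'c \<Rightarrow> nat \<Rightarrow> real" and \<beta> :: "'c \<Rightarrow> real"
  assumes C: "finite C" and "n > 0" and H: "finite H" "H \<noteq> {}"
    and g: "\<And>h c a. 0 \<le> g h c a \<and> g h c a \<le> 1"
    and N: "\<And>Y. Y \<in> PiE_dflt C 0 (\<lambda>_. {..<n}) \<Longrightarrow> real (card ((\<lambda>h. restrict (\<lambda>c. g h c (Y c)) C) ` H)) \<le> N"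
  shows "avg (PiE_dflt C 0 (\<lambda>_. {..<n}))
           (\<lambda>Y. Max ((\<lambda>h. \<Sum>c\<in>C. \<beta> c * (avg {..<n} (g h c) - g h c (Y c))) ` H))
         \<le> sqrt (\<Sum>c\<in>C. (\<beta> c)\<^sup>2) * sqrt (2 * ln N)"
proof -
  define P where "P = PiE_dflt C 0 (\<lambda>_::'c. {..<n})"
  have P: "finite P" "P \<noteq> {}" unfolding P_def using C \<open>n > 0\<close> by auto
  define R where "R s Y = Max ((\<lambda>h. \<Sum>c\<in>C. s c * (\<beta> c * (g h c (Y c) - 1/2))) ` H)" for s Y
  define r where "r = sqrt (\<Sum>c\<in>C. (\<beta> c)\<^sup>2) / 2"
  have ghost: "(\<Sum>c\<in>C. \<beta> c * (avg {..<n} (g h c) - g h c (Y c)))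
      = avg P (\<lambda>Y'. \<Sum>c\<in>C. \<beta> c * (g h c (Y' c) - g h c (Y c)))" for h Y
  proof -
    have "avg P (\<lambda>Y'. \<Sum>c\<in>C. \<beta> c * (g h c (Y' c) - g h c (Y c)))
        = (\<Sum>c\<in>C. \<beta> c * (avg P (\<lambda>Y'. g h c (Y' c)) - g h c (Y c)))"
      using P by (simp add: avg_sum avg_cmult avg_diff avg_const)
    also have "\<dots> = (\<Sum>c\<in>C. \<beta> c * (avg {..<n} (g h c) - g h c (Y c)))"
      unfolding P_def using C \<open>n > 0\<close>
      by (intro sum.cong refl arg_cong2[where f = "(*)"] arg_cong2[where f = "(-)"] avg_PiE_dflt_coordinate) auto
    finally show ?thesis by simp
  qed
  have "avg P (\<lambda>Y. Max ((\<lambda>h. \<Sum>c\<in>C. \<beta> c * (avg {..<n} (g h c) - g h c (Y c))) ` H))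
      \<le> avg P (\<lambda>Y. avg P (\<lambda>Y'. Max ((\<lambda>h. \<Sum>c\<in>C. \<beta> c * (g h c (Y' c) - g h c (Y c))) ` H)))"
    unfolding ghost by (intro avg_mono Max_avg_le_avg_Max H)
  also have "\<dots> = avg (P \<times> P) (\<lambda>p. Max ((\<lambda>h. \<Sum>c\<in>C. \<beta> c * (g h c (snd p c) - g h c (fst p c))) ` H))"
    (is "_ = ?W") by (rule avg_Times)
  also have "\<dots> = avg (sign_vectors C) (\<lambda>_. ?W)"
    by (rule avg_const[symmetric]) (use finite_sign_vectors[OF C] sign_vectors_nonempty in auto)
  also have "\<dots> \<le> avg (sign_vectors C) (\<lambda>s. avg P (R s) + avg P (R (flip_signs C s)))"
    using P H unfolding R_def P_def by (intro avg_mono avg_Max_sample_diff_le) auto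
  also have "\<dots> = 2 * avg P (\<lambda>Y. avg (sign_vectors C) (\<lambda>s. R s Y))"
    using avg_flip_signs[where F = "\<lambda>s. avg P (R s)"] avg_swap[of "sign_vectors C" P "\<lambda>s Y. R s Y"]
    by (simp add: avg_add)
  also have "\<dots> \<le> 2 * avg P (\<lambda>Y. r * sqrt (2 * ln N))"
    unfolding R_def r_def using C H g N unfolding P_def
    by (intro mult_left_mono avg_mono avg_Max_centered_rademacher_le) auto
  finally show ?thesis using P by (simp add: avg_const r_def P_def)
qed

section \<open>The multitask subsampling bound\<close>

locale multitask_subsampling =
  fixes S :: "nat \<Rightarrow> nat \<Rightarrow> 'x" and f :: "nat \<Rightarrow> 'x \<Rightarrow> bool" and H :: "('x \<Rightarrow> bool) set"
    and T n m d :: nat and I :: "nat set" and \<alpha> :: "nat \<Rightarrow> nat \<Rightarrow> real"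
  assumes I_sub: "I \<subseteq> {..<T}" and alpha: "\<forall>t<T. \<alpha> t \<in> Lambda T I"
    and vc: "has_vc_dim H d" and d_pos: "1 \<le> d" and d_le_m: "d \<le> m" and m_le_n: "m \<le> n"
    and T_pos: "0 < T"
begin

lemma finite_I: "finite I"
  using I_sub finite_subset by blast

lemma m_pos: "1 \<le> m" and n_pos: "0 < n"
  using d_pos d_le_m m_le_n by auto

lemma alpha_nonneg: "t < T \<Longrightarrow> i \<in> I \<Longrightarrow> 0 \<le> \<alpha> t i"
  using alpha I_sub by (auto simp: Lambda_def)

lemma sum_alpha: "t < T \<Longrightarrow> (\<Sum>i\<in>I. \<alpha> t i) = 1"
proof -
  assume t: "t < T"
  have "(\<Sum>i\<in>I. \<alpha> t i) = (\<Sum>i<T. \<alpha> t i)"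
    by (rule sum.mono_neutral_left) (use I_sub alpha t in \<open>auto simp: Lambda_def\<close>)
  also have "\<dots> = 1" using alpha t by (auto simp: Lambda_def)
  finally show ?thesis .
qed

lemma card_I_pos: "1 \<le> card I"
  using sum_alpha[OF T_pos] finite_I by (auto simp: Suc_le_eq card_gt_0_iff)

lemma norm_12_pos: "0 < norm_12 T I \<alpha>"
proof -
  have "(\<Sum>i\<in>I. \<Sum>t<T. \<alpha> t i) = real T"
    using sum_alpha by (subst sum.swap) simp
  then have "\<not> (\<forall>i\<in>I. (\<Sum>t<T. \<alpha> t i) = 0)"
    using T_pos sum.neutral[of I "\<lambda>i. \<Sum>t<T. \<alpha> t i"] by force
  then obtain i where "i \<in> I" "(\<Sum>t<T. \<alpha> t i) \<noteq> 0" by blast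
  then have "0 < (\<Sum>i\<in>I. (\<Sum>t<T. \<alpha> t i)\<^sup>2)"
    using finite_I by (intro sum_pos2) auto
  then show ?thesis unfolding norm_12_def by simp
qed

definition loss :: "nat \<Rightarrow> ('x \<Rightarrow> bool) \<Rightarrow> nat \<Rightarrow> real" where
  "loss i h a = zero_one_loss (h (S i a)) (f i (S i a))"

definition sample_points :: "'x set" where
  "sample_points = (\<lambda>(i, a). S i a) ` (I \<times> {..<n})"

definition restrict_to_sample :: "('x \<Rightarrow> bool) \<Rightarrow> 'x \<Rightarrow> bool" where
  "restrict_to_sample h x = (x \<in> sample_points \<and> h x)"

definition H_sample :: "('x \<Rightarrow> bool) set" where
  "H_sample = restrict_to_sample ` H"

lemma loss_bounds: "0 \<le> loss i h a \<and> loss i h a \<le> 1"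
  unfolding loss_def zero_one_loss_def by auto

lemma loss_restrict_to_sample:
  assumes "i \<in> I" "a < n"
  shows "loss i (restrict_to_sample h) a = loss i h a"
proof -
  have "S i a \<in> sample_points" unfolding sample_points_def using assms by force
  then show ?thesis unfolding loss_def restrict_to_sample_def by simp
qed

lemma err_full_eq_avg: "err_full S f n i h = avg {..<n} (loss i h)"
  unfolding err_full_def avg_def loss_def by simp

lemma finite_H_sample: "finite H_sample"
proof (rule finite_subset)
  have "restrict_to_sample h = (\<lambda>x. x \<in> {x \<in> sample_points. h x})" for h
    unfolding restrict_to_sample_def by auto
  then show "H_sample \<subseteq> (\<lambda>A x. x \<in> A) ` Pow sample_points"
    unfolding H_sample_def by blast
  show "finite ((\<lambda>A x. x \<in> A) ` Pow sample_points)"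
    unfolding sample_points_def using finite_I by auto
qed

lemma H_sample_nonempty: "H_sample \<noteq> {}"
  using vc unfolding H_sample_def has_vc_dim_def shatters_def by blast

lemma shatters_restrict_to_sample:
  assumes "A \<subseteq> sample_points" "shatters H_sample A"
  shows "shatters H A"
proof -
  have "{x \<in> A. restrict_to_sample h x} = {x \<in> A. h x}" for h
    using assms(1) unfolding restrict_to_sample_def by auto
  then show ?thesis using assms(2) unfolding shatters_def H_sample_def by auto
qed

text \<open>\<open>M i a\<close> is the weight that the empirical error of task \<open>i\<close> puts on its \<open>a\<close>-th point:
  subsample indicators or draw counts, divided by \<open>m\<close>.\<close>

definition gap :: "nat \<Rightarrow> ('x \<Rightarrow> bool) \<Rightarrow> (nat \<Rightarrow> nat \<Rightarrow> real) \<Rightarrow> real" where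
  "gap t h M = (1 / real T) * (\<Sum>i\<in>I. \<alpha> t i * (err_full S f n i h - (\<Sum>a<n. M i a * loss i h a)))"

definition worst_gap :: "(nat \<Rightarrow> nat \<Rightarrow> real) \<Rightarrow> real" where
  "worst_gap M = (\<Sum>t<T. Max ((\<lambda>h. gap t h M) ` H_sample))"

lemma gap_le_Max:
  assumes "h \<in> H"
  shows "gap t h M \<le> Max ((\<lambda>h. gap t h M) ` H_sample)"
proof -
  have "gap t (restrict_to_sample h) M = gap t h M"
    unfolding gap_def err_full_eq_avg
    by (intro arg_cong2[where f = "(*)"] refl sum.cong) (auto intro!: avg_cong simp: loss_restrict_to_sample)
  then have "gap t h M \<in> (\<lambda>h. gap t h M) ` H_sample"
    unfolding H_sample_def using assms by (metis image_eqI)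
  then show ?thesis using finite_H_sample by simp
qed

lemma gap_mixture:
  assumes "finite A" "sum \<mu> A = 1"
  shows "gap t h (\<lambda>i a. (\<Sum>y\<in>A. \<mu> y * u y i a) / real m) = (\<Sum>y\<in>A. \<mu> y * gap t h (\<lambda>i a. u y i a / real m))"
proof -
  have "(\<Sum>y\<in>A. \<mu> y * gap t h (\<lambda>i a. u y i a / real m))
      = (1 / real T) * (\<Sum>i\<in>I. \<alpha> t i * ((\<Sum>y\<in>A. \<mu> y) * err_full S f n i h
          - (\<Sum>a<n. (\<Sum>y\<in>A. \<mu> y * u y i a) / real m * loss i h a)))"
    unfolding gap_def
    by (simp add: sum_distrib_left sum_distrib_right sum_subtractf right_diff_distrib sum_divide_distrib
        sum.swap[of _ A] algebra_simps)
  then show ?thesis using assms(2) unfolding gap_def by simp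
qed

lemma jensen_exp_worst_gap:
  assumes "l > 0"
  shows "jensen_on_matrix_mixtures (\<lambda>M. exp (l * worst_gap (\<lambda>i a. M i a / real m)))"
  unfolding jensen_on_matrix_mixtures_def
proof (intro allI impI)
  fix A :: "(nat \<Rightarrow> nat) set" and \<mu> :: "(nat \<Rightarrow> nat) \<Rightarrow> real" and u
  assume A: "finite A" "\<forall>y\<in>A. 0 \<le> \<mu> y" "sum \<mu> A = 1"
  have "worst_gap (\<lambda>i a. (\<Sum>y\<in>A. \<mu> y * u y i a) / real m)
      = (\<Sum>t<T. Max ((\<lambda>h. \<Sum>y\<in>A. \<mu> y * gap t h (\<lambda>i a. u y i a / real m)) ` H_sample))"
    unfolding worst_gap_def by (simp add: gap_mixture[OF A(1,3)])
  also have "\<dots> \<le> (\<Sum>t<T. \<Sum>y\<in>A. \<mu> y * Max ((\<lambda>h. gap t h (\<lambda>i a. u y i a / real m)) ` H_sample))"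
    using A by (intro sum_mono Max_weighted_sum_le finite_H_sample H_sample_nonempty) auto
  also have "\<dots> = (\<Sum>y\<in>A. \<mu> y * worst_gap (\<lambda>i a. u y i a / real m))"
    unfolding worst_gap_def by (simp add: sum_distrib_left sum.swap[of _ A])
  finally have "l * worst_gap (\<lambda>i a. (\<Sum>y\<in>A. \<mu> y * u y i a) / real m)
      \<le> l * (\<Sum>y\<in>A. \<mu> y * worst_gap (\<lambda>i a. u y i a / real m))"
    using assms by (intro mult_left_mono) auto
  also have "\<dots> = (\<Sum>y\<in>A. \<mu> y * (l * worst_gap (\<lambda>i a. u y i a / real m)))"
    by (simp add: sum_distrib_left mult.left_commute)
  finally have "l * worst_gap (\<lambda>i a. (\<Sum>y\<in>A. \<mu> y * u y i a) / real m)
      \<le> (\<Sum>y\<in>A. \<mu> y * (l * worst_gap (\<lambda>i a. u y i a / real m)))" .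
  then have "exp (l * worst_gap (\<lambda>i a. (\<Sum>y\<in>A. \<mu> y * u y i a) / real m))
      \<le> exp (\<Sum>y\<in>A. \<mu> y * (l * worst_gap (\<lambda>i a. u y i a / real m)))"
    by simp
  also have "\<dots> \<le> (\<Sum>y\<in>A. \<mu> y * exp (l * worst_gap (\<lambda>i a. u y i a / real m)))"
    using A by (intro exp_weighted_sum_le) auto
  finally show "exp (l * worst_gap (\<lambda>i a. (\<Sum>y\<in>A. \<mu> y * u y i a) / real m))
      \<le> (\<Sum>y\<in>A. \<mu> y * exp (l * worst_gap (\<lambda>i a. u y i a / real m)))" .
qed

definition subsamples :: "(nat \<Rightarrow> nat set) set" where
  "subsamples = PiE_dflt I {} (\<lambda>_. size_subsets n m)"

lemma finite_subsamples: "finite subsamples"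
  unfolding subsamples_def using finite_I finite_size_subsets by auto

lemma subsamples_nonempty: "subsamples \<noteq> {}"
  unfolding subsamples_def using size_subsets_nonempty[OF m_le_n] by auto

lemma excess_le_worst_gap:
  assumes J: "J \<in> subsamples" and h: "\<forall>t<T. h t \<in> H"
  shows "(1 / real T) * (\<Sum>t<T. err_full_w S f n I (\<alpha> t) (h t))
         - (1 / real T) * (\<Sum>t<T. err_sub_w S f m J I (\<alpha> t) (h t))
         \<le> worst_gap (\<lambda>i a. subsample_matrix I J i a / real m)"
proof -
  have "err_sub S f m (J i) i g = (\<Sum>a<n. subsample_matrix I J i a / real m * loss i g a)"
    if "i \<in> I" for i g
  proof -
    have "J i \<subseteq> {..<n}" using J that unfolding subsamples_def PiE_dflt_def size_subsets_def by auto
    have "(\<Sum>a<n. subsample_matrix I J i a / real m * loss i g a)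
        = (\<Sum>a<n. if a \<in> J i then loss i g a / real m else 0)"
      using that by (intro sum.cong) (auto simp: subsample_matrix_def)
    also have "\<dots> = (\<Sum>a\<in>J i. loss i g a / real m)"
      using \<open>J i \<subseteq> {..<n}\<close> by (simp add: sum.inter_restrict[symmetric] Int_absorb1)
    finally have "(\<Sum>a<n. subsample_matrix I J i a / real m * loss i g a) = (\<Sum>a\<in>J i. loss i g a / real m)" .
    then show ?thesis unfolding err_sub_def loss_def by (simp add: sum_divide_distrib)
  qed
  then have "(1 / real T) * (\<Sum>t<T. err_full_w S f n I (\<alpha> t) (h t))
         - (1 / real T) * (\<Sum>t<T. err_sub_w S f m J I (\<alpha> t) (h t))
      = (\<Sum>t<T. gap t (h t) (\<lambda>i a. subsample_matrix I J i a / real m))"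
    unfolding gap_def err_full_w_def err_sub_w_def
    by (simp add: sum_subtractf right_diff_distrib sum_distrib_left)
  also have "\<dots> \<le> worst_gap (\<lambda>i a. subsample_matrix I J i a / real m)"
    unfolding worst_gap_def using h by (intro sum_mono gap_le_Max) auto
  finally show ?thesis .
qed

definition draw_slots :: "(nat \<times> nat) set" where
  "draw_slots = I \<times> {..<m}"

definition flat_draws :: "(nat \<times> nat \<Rightarrow> nat) set" where
  "flat_draws = PiE_dflt draw_slots 0 (\<lambda>_. {..<n})"

definition flat_gap :: "nat \<Rightarrow> (nat \<times> nat \<Rightarrow> nat) \<Rightarrow> ('x \<Rightarrow> bool) \<Rightarrow> real" where
  "flat_gap t Y h = (\<Sum>c\<in>draw_slots. \<alpha> t (fst c) / (real T * real m)
                       * (avg {..<n} (loss (fst c) h) - loss (fst c) h (Y c)))"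

definition flat_worst_gap :: "(nat \<times> nat \<Rightarrow> nat) \<Rightarrow> real" where
  "flat_worst_gap Y = (\<Sum>t<T. Max ((\<lambda>h. flat_gap t Y h) ` H_sample))"

lemma finite_draw_slots: "finite draw_slots"
  unfolding draw_slots_def using finite_I by auto

lemma sum_draw_slots: "(\<Sum>c\<in>draw_slots. F c) = (\<Sum>i\<in>I. \<Sum>l<m. F (i, l))"
  unfolding draw_slots_def by (simp add: sum.cartesian_product)

lemma bij_betw_curry_draws:
  "bij_betw (\<lambda>Y i l. Y (i, l)) flat_draws (PiE_dflt I (\<lambda>_. 0) (\<lambda>_. draw_seqs n m))"
proof (rule bij_betw_byWitness[where f' = "\<lambda>Y c. Y (fst c) (snd c)"])
  show "(\<lambda>Y c. Y (fst c) (snd c)) ` PiE_dflt I (\<lambda>_. 0) (\<lambda>_. draw_seqs n m) \<subseteq> flat_draws"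
    by (auto simp: flat_draws_def draw_slots_def draw_seqs_def PiE_dflt_def fun_eq_iff)
qed (auto simp: flat_draws_def draw_slots_def draw_seqs_def PiE_dflt_def)

lemma worst_gap_draw_matrix:
  assumes Y: "Y \<in> flat_draws"
  shows "worst_gap (\<lambda>i a. draw_matrix m I (\<lambda>i l. Y (i, l)) i a / real m) = flat_worst_gap Y"
proof -
  have "gap t h (\<lambda>i a. draw_matrix m I (\<lambda>i l. Y (i, l)) i a / real m) = flat_gap t Y h" for t h
  proof -
    have "(\<Sum>a<n. draw_matrix m I (\<lambda>i l. Y (i, l)) i a / real m * loss i h a)
        = (\<Sum>l<m. loss i h (Y (i, l))) / real m" if "i \<in> I" for i
    proof -
      have "(\<Sum>a<n. draw_matrix m I (\<lambda>i l. Y (i, l)) i a / real m * loss i h a)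
          = (\<Sum>a<n. draw_count m (\<lambda>l. Y (i, l)) a * loss i h a) / real m"
        using that by (simp add: draw_matrix_def sum_divide_distrib)
      also have "\<dots> = (\<Sum>l<m. loss i h (Y (i, l))) / real m"
        using that Y by (subst sum_draw_count_weighted) (auto simp: flat_draws_def draw_slots_def PiE_dflt_def)
      finally show ?thesis .
    qed
    then show ?thesis
      unfolding gap_def flat_gap_def sum_draw_slots err_full_eq_avg using m_pos
      by (simp add: sum_distrib_left right_diff_distrib sum_subtractf sum_divide_distrib algebra_simps)
  qed
  then show ?thesis unfolding worst_gap_def flat_worst_gap_def by simp
qed

lemma avg_exp_worst_gap_le_flat_draws:
  assumes "l > 0"
  shows "avg subsamples (\<lambda>J. exp (l * worst_gap (\<lambda>i a. subsample_matrix I J i a / real m)))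
         \<le> avg flat_draws (\<lambda>Y. exp (l * flat_worst_gap Y))"
proof -
  have "avg subsamples (\<lambda>J. exp (l * worst_gap (\<lambda>i a. subsample_matrix I J i a / real m)))
      \<le> avg (PiE_dflt I (\<lambda>_. 0) (\<lambda>_. draw_seqs n m)) (\<lambda>Y. exp (l * worst_gap (\<lambda>i a. draw_matrix m I Y i a / real m)))"
    unfolding subsamples_def
    by (rule avg_subsamples_le_avg_draws[OF finite_I jensen_exp_worst_gap[OF assms] m_pos m_le_n])
  also have "\<dots> = avg flat_draws (\<lambda>Y. exp (l * flat_worst_gap Y))"
    by (simp add: avg_reindex[OF bij_betw_curry_draws] worst_gap_draw_matrix cong: avg_cong)
  finally show ?thesis .
qed

lemma flat_gap_update_le:
  assumes c: "c \<in> draw_slots" and "t < T"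
  shows "\<bar>flat_gap t (Y(c := v)) h - flat_gap t Y h\<bar> \<le> \<alpha> t (fst c) / (real T * real m)"
proof -
  define w where "w = \<alpha> t (fst c) / (real T * real m)"
  have "0 \<le> w" using assms alpha_nonneg unfolding w_def draw_slots_def by auto
  have "flat_gap t (Y(c := v)) h - flat_gap t Y h
      = (\<Sum>c'\<in>draw_slots. if c' = c then w * (loss (fst c) h (Y c) - loss (fst c) h v) else 0)"
    unfolding flat_gap_def sum_subtractf[symmetric] w_def by (intro sum.cong) (auto simp: algebra_simps)
  also have "\<dots> = w * (loss (fst c) h (Y c) - loss (fst c) h v)"
    using c finite_draw_slots by simp
  moreover have "\<bar>loss (fst c) h (Y c) - loss (fst c) h v\<bar> \<le> 1"
    using loss_bounds[of "fst c" h v] loss_bounds[of "fst c" h "Y c"] by (simp add: abs_le_iff)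
  ultimately show ?thesis
    using \<open>0 \<le> w\<close> by (simp add: abs_mult w_def[symmetric] mult_left_le)
qed

lemma flat_worst_gap_update_le:
  assumes "c \<in> draw_slots"
  shows "\<bar>flat_worst_gap (Y(c := v)) - flat_worst_gap Y\<bar> \<le> (\<Sum>t<T. \<alpha> t (fst c)) / (real T * real m)"
proof -
  have "\<bar>flat_worst_gap (Y(c := v)) - flat_worst_gap Y\<bar>
      \<le> (\<Sum>t<T. \<bar>Max ((\<lambda>h. flat_gap t (Y(c := v)) h) ` H_sample) - Max ((\<lambda>h. flat_gap t Y h) ` H_sample)\<bar>)"
    unfolding flat_worst_gap_def sum_subtractf[symmetric] by (rule sum_abs)
  also have "\<dots> \<le> (\<Sum>t<T. \<alpha> t (fst c) / (real T * real m))"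
    using assms by (intro sum_mono Max_image_diff_le finite_H_sample H_sample_nonempty flat_gap_update_le) auto
  finally show ?thesis by (simp add: sum_divide_distrib)
qed

lemma sum_draw_slots_weight_squares:
  "(\<Sum>c\<in>draw_slots. ((\<Sum>t<T. \<alpha> t (fst c)) / (real T * real m))\<^sup>2) = (norm_12 T I \<alpha>)\<^sup>2 / ((real T)\<^sup>2 * real m)"
proof -
  have "(\<Sum>l<m. ((\<Sum>t<T. \<alpha> t i) / (real T * real m))\<^sup>2) = (\<Sum>t<T. \<alpha> t i)\<^sup>2 / ((real T)\<^sup>2 * real m)"
    for i using m_pos by (simp add: power_divide power_mult_distrib power2_eq_square)
  then have "(\<Sum>c\<in>draw_slots. ((\<Sum>t<T. \<alpha> t (fst c)) / (real T * real m))\<^sup>2)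
      = (\<Sum>i\<in>I. (\<Sum>t<T. \<alpha> t i)\<^sup>2) / ((real T)\<^sup>2 * real m)"
    unfolding sum_draw_slots sum_divide_distrib by simp
  then show ?thesis unfolding norm_12_def by (simp add: sum_nonneg)
qed

lemma avg_exp_flat_worst_gap_le:
  assumes "l > 0"
  shows "avg flat_draws (\<lambda>Y. exp (l * flat_worst_gap Y))
         \<le> exp (l * avg flat_draws flat_worst_gap + l\<^sup>2 * ((norm_12 T I \<alpha>)\<^sup>2 / ((real T)\<^sup>2 * real m)) / 8)"
proof -
  have "avg flat_draws (\<lambda>Y. exp (l * (flat_worst_gap Y - avg flat_draws flat_worst_gap)))
      \<le> exp (l\<^sup>2 * ((norm_12 T I \<alpha>)\<^sup>2 / ((real T)\<^sup>2 * real m)) / 8)"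
    unfolding flat_draws_def sum_draw_slots_weight_squares[symmetric]
    using finite_draw_slots n_pos assms flat_worst_gap_update_le by (intro mcdiarmid_avg) auto
  moreover have "avg flat_draws (\<lambda>Y. exp (l * flat_worst_gap Y))
      = avg flat_draws (\<lambda>Y. exp (l * avg flat_draws flat_worst_gap)
          * exp (l * (flat_worst_gap Y - avg flat_draws flat_worst_gap)))"
    by (intro avg_cong) (simp add: exp_add[symmetric] algebra_simps)
  then have "avg flat_draws (\<lambda>Y. exp (l * flat_worst_gap Y))
      = exp (l * avg flat_draws flat_worst_gap)
        * avg flat_draws (\<lambda>Y. exp (l * (flat_worst_gap Y - avg flat_draws flat_worst_gap)))"
    by (simp only: avg_cmult)
  ultimately show ?thesis by (simp add: exp_add)
qed

lemma card_loss_patterns_le: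
  assumes Y: "Y \<in> flat_draws"
  shows "real (card ((\<lambda>h. restrict (\<lambda>c. loss (fst c) h (Y c)) draw_slots) ` H_sample))
         \<le> (exp 1 * real (card I) * real m / real d) ^ d"
proof -
  define P where "P = (\<lambda>c. S (fst c) (Y c)) ` draw_slots"
  have "finite P" unfolding P_def using finite_draw_slots by auto
  have "P \<subseteq> sample_points"
    using Y unfolding P_def sample_points_def flat_draws_def draw_slots_def PiE_dflt_def by force
  have "card P \<le> card I * m"
    unfolding P_def using card_image_le[OF finite_draw_slots] by (simp add: draw_slots_def card_cartesian_product)
  \<comment> \<open>the loss pattern of \<open>h\<close> on the drawn points depends only on the trace of \<open>h\<close> on them\<close>
  define pattern where "pattern B = restrict (\<lambda>c. zero_one_loss (S (fst c) (Y c) \<in> B) (f (fst c) (S (fst c) (Y c)))) draw_slots"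
    for B
  have "(\<lambda>h. restrict (\<lambda>c. loss (fst c) h (Y c)) draw_slots) ` H_sample = pattern ` (\<lambda>h. {x\<in>P. h x}) ` H_sample"
    unfolding image_image pattern_def loss_def P_def by (intro image_cong refl restrict_ext) auto
  then have "card ((\<lambda>h. restrict (\<lambda>c. loss (fst c) h (Y c)) draw_slots) ` H_sample)
      \<le> card ((\<lambda>h. {x\<in>P. h x}) ` H_sample)"
    using finite_H_sample by (simp add: card_image_le)
  also have "\<dots> \<le> (\<Sum>j\<le>d. card P choose j)"
  proof (rule card_traces_le_sum_choose[OF \<open>finite P\<close>])
    fix A assume "A \<subseteq> P" "shatters H_sample A"
    then have "shatters H A" "finite A"
      using shatters_restrict_to_sample \<open>P \<subseteq> sample_points\<close> \<open>finite P\<close> finite_subset by blast+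
    then show "card A \<le> d" using vc unfolding has_vc_dim_def by blast
  qed
  also have "\<dots> \<le> (\<Sum>j\<le>d. (card I * m) choose j)"
    by (intro sum_mono binomial_right_mono \<open>card P \<le> card I * m\<close>)
  finally have "real (card ((\<lambda>h. restrict (\<lambda>c. loss (fst c) h (Y c)) draw_slots) ` H_sample))
      \<le> real (\<Sum>j\<le>d. (card I * m) choose j)"
    by linarith
  also have "\<dots> \<le> (exp 1 * real (card I * m) / real d) ^ d"
  proof (rule sum_choose_le_exp_power[OF d_pos])
    show "d \<le> card I * m" using card_I_pos d_le_m by (metis le_trans mult_1 mult_le_mono1)
  qed
  finally show ?thesis by (simp add: mult.assoc)
qed

lemma avg_Max_flat_gap_le:
  assumes "t < T"
  shows "avg flat_draws (\<lambda>Y. Max ((\<lambda>h. flat_gap t Y h) ` H_sample))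
         \<le> (1 / real T) * sqrt (\<Sum>i\<in>I. (\<alpha> t i)\<^sup>2)
            * sqrt (2 * real d * ln (exp 1 * real (card I) * real m / real d) / real m)"
proof -
  define \<beta> where "\<beta> c = \<alpha> t (fst c) / (real T * real m)" for c :: "nat \<times> nat"
  define N where "N = (exp 1 * real (card I) * real m / real d) ^ d"
  have "avg flat_draws (\<lambda>Y. Max ((\<lambda>h. flat_gap t Y h) ` H_sample)) \<le> sqrt (\<Sum>c\<in>draw_slots. (\<beta> c)\<^sup>2) * sqrt (2 * ln N)"
    unfolding flat_draws_def flat_gap_def \<beta>_def[symmetric]
    by (rule avg_Max_deviation_le[OF finite_draw_slots n_pos finite_H_sample H_sample_nonempty loss_bounds])
      (use card_loss_patterns_le in \<open>simp add: N_def flat_draws_def\<close>)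
  also have "(\<Sum>c\<in>draw_slots. (\<beta> c)\<^sup>2) = (\<Sum>i\<in>I. (\<alpha> t i)\<^sup>2) / ((real T)\<^sup>2 * real m)"
    unfolding sum_draw_slots \<beta>_def using m_pos
    by (simp add: sum_divide_distrib power_divide power_mult_distrib power2_eq_square mult.assoc)
  also have "ln N = real d * ln (exp 1 * real (card I) * real m / real d)"
    unfolding N_def using card_I_pos m_pos d_pos by (simp add: ln_realpow)
  finally show ?thesis
    using T_pos by (simp add: real_sqrt_divide real_sqrt_mult mult.assoc mult.left_commute)
qed

lemma avg_flat_worst_gap_le:
  "avg flat_draws flat_worst_gap
   \<le> (1 / real T) * norm_21 T I \<alpha> * sqrt (2 * real d * ln (exp 1 * real (card I) * real m / real d) / real m)"
proof -
  have "avg flat_draws flat_worst_gap = (\<Sum>t<T. avg flat_draws (\<lambda>Y. Max ((\<lambda>h. flat_gap t Y h) ` H_sample)))"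
    unfolding flat_worst_gap_def by (rule avg_sum)
  also have "\<dots> \<le> (\<Sum>t<T. (1 / real T) * sqrt (\<Sum>i\<in>I. (\<alpha> t i)\<^sup>2)
                   * sqrt (2 * real d * ln (exp 1 * real (card I) * real m / real d) / real m))"
    by (intro sum_mono avg_Max_flat_gap_le) auto
  finally show ?thesis
    unfolding norm_21_def by (simp add: sum_distrib_left sum_distrib_right)
qed

lemma avg_exp_worst_gap_subsamples_le:
  assumes "l > 0"
  shows "avg subsamples (\<lambda>J. exp (l * worst_gap (\<lambda>i a. subsample_matrix I J i a / real m)))
         \<le> exp (l * ((1 / real T) * norm_21 T I \<alpha>
                      * sqrt (2 * real d * ln (exp 1 * real (card I) * real m / real d) / real m))
                + l\<^sup>2 * ((norm_12 T I \<alpha>)\<^sup>2 / ((real T)\<^sup>2 * real m)) / 8)"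
proof -
  have "avg subsamples (\<lambda>J. exp (l * worst_gap (\<lambda>i a. subsample_matrix I J i a / real m)))
      \<le> avg flat_draws (\<lambda>Y. exp (l * flat_worst_gap Y))"
    by (rule avg_exp_worst_gap_le_flat_draws[OF assms])
  also have "\<dots> \<le> exp (l * avg flat_draws flat_worst_gap + l\<^sup>2 * ((norm_12 T I \<alpha>)\<^sup>2 / ((real T)\<^sup>2 * real m)) / 8)"
    by (rule avg_exp_flat_worst_gap_le[OF assms])
  also have "\<dots> \<le> exp (l * ((1 / real T) * norm_21 T I \<alpha>
                      * sqrt (2 * real d * ln (exp 1 * real (card I) * real m / real d) / real m))
                + l\<^sup>2 * ((norm_12 T I \<alpha>)\<^sup>2 / ((real T)\<^sup>2 * real m)) / 8)"
    using mult_left_mono[OF avg_flat_worst_gap_le, of l] assms by simp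
  finally show ?thesis .
qed

lemma subsample_pmf_eq: "subsample_pmf I n m = pmf_of_set subsamples"
  unfolding subsample_pmf_def subsamples_def size_subsets_def[symmetric]
  using finite_I finite_size_subsets size_subsets_nonempty[OF m_le_n] by (intro Pi_pmf_of_set) auto

theorem prob_excess_le:
  assumes \<delta>: "0 < \<delta>" "\<delta> < 1"
  shows "measure_pmf.prob (subsample_pmf I n m)
     {J. \<forall>h. (\<forall>t<T. h t \<in> H) \<longrightarrow>
        (1 / real T) * (\<Sum>t<T. err_full_w S f n I (\<alpha> t) (h t))
        \<le> (1 / real T) * (\<Sum>t<T. err_sub_w S f m J I (\<alpha> t) (h t))
          + (1 / real T) * norm_21 T I \<alpha> * sqrt (2 * real d * ln (exp 1 * real (card I) * real m / real d) / real m)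
          + (1 / real T) * norm_12 T I \<alpha> * sqrt (ln (4 / \<delta>) / (2 * real m))}
     \<ge> 1 - \<delta> / 4"
proof -
  define \<Phi> where "\<Phi> J = worst_gap (\<lambda>i a. subsample_matrix I J i a / real m)" for J
  define A where "A = (1 / real T) * norm_21 T I \<alpha> * sqrt (2 * real d * ln (exp 1 * real (card I) * real m / real d) / real m)"
  define \<sigma> where "\<sigma> = norm_12 T I \<alpha> / (real T * sqrt (real m))"
  have "\<sigma> > 0" unfolding \<sigma>_def using norm_12_pos T_pos m_pos by simp
  have "\<sigma>\<^sup>2 = (norm_12 T I \<alpha>)\<^sup>2 / ((real T)\<^sup>2 * real m)"
    unfolding \<sigma>_def by (simp add: power_divide power_mult_distrib)
  have mgf: "avg subsamples (\<lambda>J. exp (l * \<Phi> J)) \<le> exp (l * A + l\<^sup>2 * \<sigma>\<^sup>2 / 8)" if "l > 0" for l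
    unfolding \<Phi>_def A_def \<open>\<sigma>\<^sup>2 = _\<close> by (rule avg_exp_worst_gap_subsamples_le[OF that])
  have "\<sigma> * sqrt (ln (1 / (\<delta> / 4)) / 2) = (1 / real T) * norm_12 T I \<alpha> * sqrt (ln (4 / \<delta>) / (2 * real m))"
    unfolding \<sigma>_def by (simp add: real_sqrt_divide real_sqrt_mult)
  then have tail: "real (card {J\<in>subsamples. A + (1 / real T) * norm_12 T I \<alpha> * sqrt (ln (4 / \<delta>) / (2 * real m)) < \<Phi> J})
      / real (card subsamples) \<le> \<delta> / 4"
    using chernoff_avg[OF finite_subsamples subsamples_nonempty \<open>\<sigma> > 0\<close> _ _ mgf, of "\<delta> / 4"] \<delta> by simp
  show ?thesis
    unfolding subsample_pmf_eq A_def[symmetric]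
  proof (rule prob_pmf_of_set_ge[OF finite_subsamples subsamples_nonempty _ tail], intro allI impI)
    fix J h assume "J \<in> subsamples" "\<not> A + (1 / real T) * norm_12 T I \<alpha> * sqrt (ln (4 / \<delta>) / (2 * real m)) < \<Phi> J"
      and "\<forall>t<T. h t \<in> H"
    then show "(1 / real T) * (\<Sum>t<T. err_full_w S f n I (\<alpha> t) (h t))
        \<le> (1 / real T) * (\<Sum>t<T. err_sub_w S f m J I (\<alpha> t) (h t)) + A
          + (1 / real T) * norm_12 T I \<alpha> * sqrt (ln (4 / \<delta>) / (2 * real m))"
      using excess_le_worst_gap unfolding \<Phi>_def by fastforce
  qed
qed

end

theorem mainTheorem4:
  fixes S :: "nat \<Rightarrow> nat \<Rightarrow> 'x"
    and f :: "nat \<Rightarrow> 'x \<Rightarrow> bool"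
    and H :: "('x \<Rightarrow> bool) set"
    and T n m d k :: nat
    and I :: "nat set"
    and \<alpha> :: "nat \<Rightarrow> nat \<Rightarrow> real"
    and \<delta> :: real
  assumes I_sub: "I \<subseteq> {..<T}"
    and I_card: "card I = k"
    and alpha: "\<forall>t<T. \<alpha> t \<in> Lambda T I"
    and vc: "has_vc_dim H d"
    and dm: "1 \<le> d" "d \<le> m" "m \<le> n"
    and delta: "0 < \<delta>" "\<delta> < 1"
  shows "measure_pmf.prob (subsample_pmf I n m)
     {J. \<forall>h. (\<forall>t<T. h t \<in> H) \<longrightarrow>
        (1 / real T) * (\<Sum>t<T. err_full_w S f n I (\<alpha> t) (h t))
        \<le> (1 / real T) * (\<Sum>t<T. err_sub_w S f m J I (\<alpha> t) (h t))
          + (1 / real T) * norm_21 T I \<alpha> * sqrt (2 * real d * ln (exp 1 * real k * real m / real d) / real m)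
          + (1 / real T) * norm_12 T I \<alpha> * sqrt (ln (4 / \<delta>) / (2 * real m))}
     \<ge> 1 - \<delta> / 4"
proof (cases "T = 0")
  case True
  \<comment> \<open>every term vanishes, using \<open>1 / 0 = 0\<close>, so the event is certain\<close>
  then show ?thesis using delta by simp
next
  case False
  interpret multitask_subsampling S f H T n m d I \<alpha>
    using I_sub alpha vc dm False by unfold_locales auto
  show ?thesis using prob_excess_le[OF delta] I_card by simp
qed

end
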